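(* For every two-player game $G$ with question sets of sizes $\textsc x,\textsc y$ and answer sets of sizes $\textsc a,\textsc b$: (1) $\omega^*(G)\le\min\{\textsc x,\textsc y\}\,\omega(G)$; (2) $\omega^*(G)\le K_G^{\mathbb C}\sqrt{\textsc a\textsc b}\,\omega(G)$, where $K_G^{\mathbb C}$ is the complex Grothendieck constant.
   Context: A two-player game has coefficients $G_{x,y}^{a,b}=\pi(x,y)V(a,b,x,y)\ge0$. $\omega(G)$ is the supremum of $|\sum G_{x,y}^{a,b}P(a,b|x,y)|$ over the convex hull of product conditional distributions $P_1(a|x)P_2(b|y)$. $\omega^*(G)$ is the supremum of $|\sum G_{x,y}^{a,b}\langle\psi|A_x^a\otimes B_y^b|\psi\rangle|$ over all $d$, unit $|\psi\rangle\in\mathbb C^d\otimes\mathbb C^d$ and POVMs $\{A_x^a\}_a,\{B_y^b\}_b$ in $M_d$ (positive semidefinite, summing to identity). $K_G^{\mathbb C}$ is the smallest constant such that for all $n,m$ and $C\in\mathbb C^{n\times m}$, $\sup_{d;\,a_x,b_y\in\mathrm{Ball}(\mathbb C^d)}|\sum c_{xy}\,a_x\cdot b_y|\le K\sup_{|s_x|,|t_y|\le1}|\sum c_{xy}s_xt_y|$. *)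

theory Defs
  imports "HOL-Analysis.Analysis"
begin

definition cond_dist :: "('x \<Rightarrow> 'a::finite \<Rightarrow> real) \<Rightarrow> bool" where
  "cond_dist P \<longleftrightarrow> (\<forall>x a. 0 \<le> P x a) \<and> (\<forall>x. (\<Sum>a\<in>UNIV. P x a) = 1)"

text \<open>Convex hull of product conditional distributions P1(a|x) P2(b|y), written out as
  finite convex combinations (function spaces carry no real_vector instance).\<close>
definition classical_corr ::
  "('x \<Rightarrow> 'y \<Rightarrow> 'a::finite \<Rightarrow> 'b::finite \<Rightarrow> real) set" where
  "classical_corr = {P. \<exists>(k::nat) (lam::nat \<Rightarrow> real) P1 P2.
      (\<forall>i<k. 0 \<le> lam i) \<and> (\<Sum>i<k. lam i) = 1 \<and>
      (\<forall>i<k. cond_dist (P1 i) \<and> cond_dist (P2 i)) \<and>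
      P = (\<lambda>x y a b. \<Sum>i<k. lam i * P1 i x a * P2 i y b)}"

definition classical_value ::
  "('x::finite \<Rightarrow> 'y::finite \<Rightarrow> 'a::finite \<Rightarrow> 'b::finite \<Rightarrow> real) \<Rightarrow> real" where
  "classical_value G = Sup ((\<lambda>P. \<bar>\<Sum>x\<in>UNIV. \<Sum>y\<in>UNIV. \<Sum>a\<in>UNIV. \<Sum>b\<in>UNIV.
        G x y a b * P x y a b\<bar>) ` classical_corr)"

text \<open>d x d complex matrices are functions nat => nat => complex, used on indices < d.
  Positive semidefinite: the quadratic form v* M v is a nonnegative real for all v in C^d.\<close>
definition psd :: "nat \<Rightarrow> (nat \<Rightarrow> nat \<Rightarrow> complex) \<Rightarrow> bool" where
  "psd d M \<longleftrightarrow> (\<forall>v::nat \<Rightarrow> complex.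
     (\<Sum>i<d. \<Sum>j<d. cnj (v i) * M i j * v j) \<in> \<real> \<and>
     0 \<le> Re (\<Sum>i<d. \<Sum>j<d. cnj (v i) * M i j * v j))"

definition povm :: "nat \<Rightarrow> ('a::finite \<Rightarrow> nat \<Rightarrow> nat \<Rightarrow> complex) \<Rightarrow> bool" where
  "povm d A \<longleftrightarrow> (\<forall>a. psd d (A a)) \<and>
     (\<forall>i<d. \<forall>j<d. (\<Sum>a\<in>UNIV. A a i j) = (if i = j then 1 else 0))"

text \<open>Vectors of C^d \<otimes> C^d are functions nat => nat => complex on indices < d
  (psi i j is the coefficient of e_i \<otimes> e_j).\<close>
definition unit_bipartite :: "nat \<Rightarrow> (nat \<Rightarrow> nat \<Rightarrow> complex) \<Rightarrow> bool" where
  "unit_bipartite d psi \<longleftrightarrow> (\<Sum>i<d. \<Sum>j<d. (cmod (psi i j))\<^sup>2) = 1"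

text \<open>\<langle>psi| A \<otimes> B |psi\<rangle>, where (A \<otimes> B)_{(i,j),(k,l)} = A_{ik} B_{jl}.\<close>
definition tensor_expect ::
  "nat \<Rightarrow> (nat \<Rightarrow> nat \<Rightarrow> complex) \<Rightarrow> (nat \<Rightarrow> nat \<Rightarrow> complex) \<Rightarrow> (nat \<Rightarrow> nat \<Rightarrow> complex) \<Rightarrow> complex" where
  "tensor_expect d psi A B =
     (\<Sum>i<d. \<Sum>j<d. \<Sum>k<d. \<Sum>l<d. cnj (psi i j) * A i k * B j l * psi k l)"

definition quantum_value ::
  "('x::finite \<Rightarrow> 'y::finite \<Rightarrow> 'a::finite \<Rightarrow> 'b::finite \<Rightarrow> real) \<Rightarrow> real" where
  "quantum_value G = Sup {cmod (\<Sum>x\<in>UNIV. \<Sum>y\<in>UNIV. \<Sum>a\<in>UNIV. \<Sum>b\<in>UNIV.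
        complex_of_real (G x y a b) * tensor_expect d psi (A x a) (B y b)) | d psi
        (A :: 'x \<Rightarrow> 'a \<Rightarrow> nat \<Rightarrow> nat \<Rightarrow> complex) (B :: 'y \<Rightarrow> 'b \<Rightarrow> nat \<Rightarrow> nat \<Rightarrow> complex).
        unit_bipartite d psi \<and> (\<forall>x. povm d (A x)) \<and> (\<forall>y. povm d (B y))}"

text \<open>K satisfies the complex Grothendieck inequality: for all n, m, C in C^(n x m),
  the sup over d and vectors a_x, b_y in the unit ball of C^d of |sum c_xy a_x . b_y|
  is at most K times the sup over |s_x|, |t_y| \<le> 1 of |sum c_xy s_x t_y|.
  (The sup on the left is written pointwise.)\<close>
definition groth_ineq_C :: "real \<Rightarrow> bool" where
  "groth_ineq_C K \<longleftrightarrow> (\<forall>(n::nat) (m::nat) (c::nat \<Rightarrow> nat \<Rightarrow> complex) (d::nat)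
      (a::nat \<Rightarrow> nat \<Rightarrow> complex) (b::nat \<Rightarrow> nat \<Rightarrow> complex).
     (\<forall>x<n. (\<Sum>i<d. (cmod (a x i))\<^sup>2) \<le> 1) \<longrightarrow> (\<forall>y<m. (\<Sum>i<d. (cmod (b y i))\<^sup>2) \<le> 1) \<longrightarrow>
     cmod (\<Sum>x<n. \<Sum>y<m. c x y * (\<Sum>i<d. a x i * b y i))
       \<le> K * Sup {cmod (\<Sum>x<n. \<Sum>y<m. c x y * s x * t y) | s t.
                   (\<forall>x<n. cmod (s x) \<le> 1) \<and> (\<forall>y<m. cmod (t y) \<le> 1)})"

definition grothendieck_C :: real where
  "grothendieck_C = Inf {K. groth_ineq_C K}"

end

(*
  (1) Fix Alice's question x\<^sub>0. By no-signalling, Alice's marginal p(a|x\<^sub>0) does not depend on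
  Bob's question, so (x, y, a, b) \<mapsto> p(a, b|x\<^sub>0, y) is a classical correlation: Alice samples a from
  her marginal, ignoring her question, and Bob samples b conditionally on a and y. Hence the
  contribution of each x\<^sub>0 to the quantum payoff is at most \<omega>(G), giving the factor |X|; exchanging
  the players gives |Y|.

  (2) Write \<langle>\<psi>|A\<otimes>B|\<psi>\<rangle> as the inner product of u = (A\<otimes>1)\<psi> and v = (1\<otimes>B)\<psi>. Since
  A\<^sub>x\<^sub>a\<^sup>2 \<le> A\<^sub>x\<^sub>a, the squared norms \<alpha>\<^sub>x\<^sub>a\<^sup>2 = \<parallel>u\<^sub>x\<^sub>a\<parallel>\<^sup>2 sum to at most 1 over a, and likewise \<beta>\<^sub>y\<^sub>b\<^sup>2 for Bob.
  By Cauchy-Schwarz the quantum payoff is at most \<Sum> G \<alpha> \<beta>, and by AM-GM this is bounded by the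
  payoffs of two product strategies (answer with probability \<ge> \<alpha>\<^sup>2 resp. \<beta>\<^sup>2, the partner
  uniformly), i.e. by \<surd>(AB) \<omega>(G). For a game with nonnegative coefficients Grothendieck's
  inequality is therefore not needed: the constant enters only through K\<^sub>G\<^sup>\<complex> \<ge> 1. Because K\<^sub>G\<^sup>\<complex> is
  an infimum, this still requires that some constant satisfies the inequality; 128 does, by
  averaging a \<cdot> b over random sign vectors and truncating the resulting scalars.
*)

theory Submission
  imports Defs
begin

lemma cnj_mult_self: "cnj z * z = of_real ((cmod z)\<^sup>2)"
  by (metis complex_norm_square mult.commute)

lemma sum_lessThan_one_supp:
  fixes f :: "nat \<Rightarrow> 'b::comm_monoid_add"
  assumes "i < d" "\<And>k. k \<noteq> i \<Longrightarrow> f k = 0"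
  shows "(\<Sum>k<d. f k) = f i"
proof -
  have "(\<Sum>k<d. f k) = (\<Sum>k\<in>{i}. f k)"
    by (rule sum.mono_neutral_right) (use assms in auto)
  then show ?thesis by simp
qed

lemma sum_lessThan_two_supp:
  fixes f :: "nat \<Rightarrow> 'b::comm_monoid_add"
  assumes "i < d" "j < d" "i \<noteq> j" "\<And>k. k \<noteq> i \<Longrightarrow> k \<noteq> j \<Longrightarrow> f k = 0"
  shows "(\<Sum>k<d. f k) = f i + f j"
proof -
  have "(\<Sum>k<d. f k) = (\<Sum>k\<in>{i,j}. f k)"
    by (rule sum.mono_neutral_right) (use assms in auto)
  then show ?thesis using assms by simp
qed

lemma cmod_sum_mult_squared_le:
  fixes x y :: "'i \<Rightarrow> complex"
  shows "(cmod (\<Sum>r\<in>R. x r * y r))\<^sup>2 \<le> (\<Sum>r\<in>R. (cmod (x r))\<^sup>2) * (\<Sum>r\<in>R. (cmod (y r))\<^sup>2)"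
proof -
  have "cmod (\<Sum>r\<in>R. x r * y r) \<le> (\<Sum>r\<in>R. cmod (x r) * cmod (y r))"
    by (metis (no_types, lifting) norm_mult norm_sum sum.cong)
  then have "(cmod (\<Sum>r\<in>R. x r * y r))\<^sup>2 \<le> (\<Sum>r\<in>R. cmod (x r) * cmod (y r))\<^sup>2"
    by (simp add: power_mono)
  also have "\<dots> \<le> (\<Sum>r\<in>R. (cmod (x r))\<^sup>2) * (\<Sum>r\<in>R. (cmod (y r))\<^sup>2)"
    by (rule Cauchy_Schwarz_ineq_sum)
  finally show ?thesis .
qed

section \<open>Positive semidefinite matrices\<close>

definition sesq_form :: "nat \<Rightarrow> (nat \<Rightarrow> nat \<Rightarrow> complex) \<Rightarrow> (nat \<Rightarrow> complex) \<Rightarrow> (nat \<Rightarrow> complex) \<Rightarrow> complex" where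
  "sesq_form d M v w = (\<Sum>i<d. \<Sum>j<d. cnj (v i) * M i j * w j)"

definition sqnorm :: "nat \<Rightarrow> (nat \<Rightarrow> complex) \<Rightarrow> real" where
  "sqnorm d v = (\<Sum>i<d. (cmod (v i))\<^sup>2)"

definition mat_vec :: "nat \<Rightarrow> (nat \<Rightarrow> nat \<Rightarrow> complex) \<Rightarrow> (nat \<Rightarrow> complex) \<Rightarrow> nat \<Rightarrow> complex" where
  "mat_vec d A v = (\<lambda>i. \<Sum>k<d. A i k * v k)"

abbreviation id_mat :: "nat \<Rightarrow> nat \<Rightarrow> complex" where
  "id_mat \<equiv> (\<lambda>i j. if i = j then 1 else 0)"

lemma sqnorm_nonneg: "0 \<le> sqnorm d a"
  unfolding sqnorm_def by (simp add: sum_nonneg)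

lemma psd_iff_sesq_form: "psd d M \<longleftrightarrow> (\<forall>v. sesq_form d M v v \<in> \<real> \<and> 0 \<le> Re (sesq_form d M v v))"
  unfolding psd_def sesq_form_def by simp

lemma psd_sesq_formD: "psd d M \<Longrightarrow> sesq_form d M v v \<in> \<real> \<and> 0 \<le> Re (sesq_form d M v v)"
  unfolding psd_iff_sesq_form by blast

lemma sesq_form_cong:
  "(\<And>i. i < d \<Longrightarrow> v i = v' i) \<Longrightarrow> (\<And>i. i < d \<Longrightarrow> w i = w' i) \<Longrightarrow>
   (\<And>i j. i < d \<Longrightarrow> j < d \<Longrightarrow> M i j = M' i j) \<Longrightarrow> sesq_form d M v w = sesq_form d M' v' w'"
  unfolding sesq_form_def by (intro sum.cong) auto

lemma sesq_form_diff: "sesq_form d (\<lambda>i j. M i j - N i j) v w = sesq_form d M v w - sesq_form d N v w"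
  unfolding sesq_form_def by (simp add: algebra_simps sum_subtractf)

lemma sesq_form_sum: "sesq_form d (\<lambda>i j. \<Sum>a\<in>S. M a i j) v w = (\<Sum>a\<in>S. sesq_form d (M a) v w)"
proof -
  have "sesq_form d (\<lambda>i j. \<Sum>a\<in>S. M a i j) v w = (\<Sum>i<d. \<Sum>j<d. \<Sum>a\<in>S. cnj (v i) * M a i j * w j)"
    unfolding sesq_form_def by (simp add: sum_distrib_left sum_distrib_right)
  also have "\<dots> = (\<Sum>i<d. \<Sum>a\<in>S. \<Sum>j<d. cnj (v i) * M a i j * w j)"
    by (intro sum.cong refl sum.swap)
  also have "\<dots> = (\<Sum>a\<in>S. sesq_form d (M a) v w)"
    unfolding sesq_form_def by (rule sum.swap)
  finally show ?thesis .
qed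

lemma sesq_form_id: "sesq_form d id_mat v v = of_real (sqnorm d v)"
  unfolding sesq_form_def sqnorm_def
  by (simp add: if_distrib if_distribR cnj_mult_self cong: if_cong)

lemma sesq_form_mat_vec: "sesq_form d A w v = (\<Sum>i<d. cnj (w i) * mat_vec d A v i)"
  unfolding sesq_form_def mat_vec_def by (simp add: sum_distrib_left mult.assoc)

lemma sesq_form_unit:
  assumes "i < d"
  shows "sesq_form d M (\<lambda>k. if k = i then 1 else 0) (\<lambda>k. if k = i then 1 else 0) = M i i"
proof -
  have "sesq_form d M (\<lambda>k. if k = i then 1 else 0) (\<lambda>k. if k = i then 1 else 0)
      = (\<Sum>k<d. cnj (if k = i then 1 else 0) * M k i)"
    unfolding sesq_form_def by (intro sum.cong refl) (subst sum_lessThan_one_supp[OF assms]; simp)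
  also have "\<dots> = M i i"
    by (subst sum_lessThan_one_supp[OF assms]) auto
  finally show ?thesis .
qed

lemma sesq_form_two:
  fixes p q :: complex
  assumes "i < d" "j < d" "i \<noteq> j"
  defines "v \<equiv> \<lambda>k. if k = i then p else if k = j then q else 0"
  shows "sesq_form d M v v = cnj p * M i i * p + cnj p * M i j * q + cnj q * M j i * p + cnj q * M j j * q"
proof -
  have row: "(\<Sum>l<d. cnj (v k) * M k l * v l) = cnj (v k) * M k i * p + cnj (v k) * M k j * q" for k
    by (subst sum_lessThan_two_supp[OF assms(1-3)]) (use assms(3) in \<open>auto simp: v_def\<close>)
  have "sesq_form d M v v = (\<Sum>k<d. cnj (v k) * M k i * p + cnj (v k) * M k j * q)"
    unfolding sesq_form_def row ..
  also have "\<dots> = cnj p * M i i * p + cnj p * M i j * q + (cnj q * M j i * p + cnj q * M j j * q)"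
    by (subst sum_lessThan_two_supp[OF assms(1-3)]) (use assms(3) in \<open>auto simp: v_def\<close>)
  finally show ?thesis by (simp add: algebra_simps)
qed

lemma psd_diag: "psd d M \<Longrightarrow> i < d \<Longrightarrow> M i i \<in> \<real> \<and> 0 \<le> Re (M i i)"
  using psd_sesq_formD[of d M "\<lambda>k. if k = i then 1 else 0"] sesq_form_unit[of i d M] by simp

lemma psd_hermitian:
  assumes "psd d M" "i < d" "j < d"
  shows "M j i = cnj (M i j)"
proof (cases "i = j")
  case True
  then show ?thesis using psd_diag[OF assms(1,2)] by (simp add: Reals_cnj_iff)
next
  case False
  have diag: "Im (M i i) = 0" "Im (M j j) = 0"
    using psd_diag[OF assms(1,2)] psd_diag[OF assms(1,3)] by (auto simp: complex_is_Real_iff)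
  \<comment> \<open>the form is real at \<open>e\<^sub>i + e\<^sub>j\<close> and at \<open>e\<^sub>i + \<i> e\<^sub>j\<close>\<close>
  have "Im (sesq_form d M (\<lambda>k. if k = i then 1 else if k = j then 1 else 0)
                           (\<lambda>k. if k = i then 1 else if k = j then 1 else 0)) = 0"
       "Im (sesq_form d M (\<lambda>k. if k = i then 1 else if k = j then \<i> else 0)
                           (\<lambda>k. if k = i then 1 else if k = j then \<i> else 0)) = 0"
    using psd_sesq_formD[OF assms(1)] by (auto simp: complex_is_Real_iff)
  with diag show ?thesis
    unfolding sesq_form_two[OF assms(2,3) False] by (intro complex_eqI) (auto simp: algebra_simps)
qed

lemma sesq_form_Suc:
  "sesq_form (Suc d) M v w = sesq_form d M v w + (\<Sum>i<d. cnj (v i) * M i d) * w d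
     + cnj (v d) * (\<Sum>j<d. M d j * w j) + cnj (v d) * M d d * w d"
  unfolding sesq_form_def by (simp add: sum.distrib sum_distrib_left sum_distrib_right algebra_simps)

lemma psd_Suc_imp_psd:
  assumes "psd (Suc d) M"
  shows "psd d M"
  unfolding psd_iff_sesq_form
proof
  fix v
  define w :: "nat \<Rightarrow> complex" where "w = (\<lambda>k. if k < d then v k else 0)"
  have "sesq_form (Suc d) M w w = sesq_form d M v v"
    unfolding sesq_form_Suc by (simp add: w_def cong: sesq_form_cong)
  then show "sesq_form d M v v \<in> \<real> \<and> 0 \<le> Re (sesq_form d M v v)"
    using psd_sesq_formD[OF assms, of w] by simp
qed

lemma psd_zero_diag_imp_zero_row:
  assumes "psd (Suc d) M" "M d d = 0" "j < d"
  shows "M d j = 0"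
proof (rule ccontr)
  assume nz: "M d j \<noteq> 0"
  let ?z = "M d j"
  define k where "k = (Re (M j j) + 1) / (2 * (cmod ?z)\<^sup>2)"
  have k: "2 * k * (cmod ?z)\<^sup>2 = Re (M j j) + 1" using nz unfolding k_def by simp
  define t where "t = - of_real k * ?z"
  define v where "v = (\<lambda>l. if l = d then t else if l = j then 1 else 0)"
  have herm: "M j d = cnj ?z" using psd_hermitian[OF assms(1), of d j] assms(3) by simp
  have "sesq_form (Suc d) M v v = cnj t * M d d * t + cnj t * M d j * 1 + cnj 1 * M j d * t + cnj 1 * M j j * 1"
    unfolding v_def by (rule sesq_form_two) (use assms(3) in auto)
  also have "\<dots> = M j j - of_real (2 * k) * (?z * cnj ?z)"
    using assms(2) herm unfolding t_def by (simp add: algebra_simps)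
  also have "\<dots> = M j j - of_real (2 * k * (cmod ?z)\<^sup>2)"
    by (simp only: of_real_mult complex_norm_square)
  finally have "Re (sesq_form (Suc d) M v v) = - 1"
    using k by simp
  then show False using psd_sesq_formD[OF assms(1), of v] by linarith
qed

lemma sesq_form_rank_one_update:
  "sesq_form d (\<lambda>i j. M i j - M i d * M d j / c) v v
     = sesq_form d M v v - (\<Sum>i<d. cnj (v i) * M i d) * (\<Sum>j<d. M d j * v j) / c"
proof -
  have "sesq_form d (\<lambda>i j. M i j - M i d * M d j / c) v v
      = sesq_form d M v v - (\<Sum>i<d. \<Sum>j<d. (cnj (v i) * M i d) * (M d j * v j)) / c"
    unfolding sesq_form_def by (simp add: algebra_simps sum_subtractf sum_divide_distrib)
  then show ?thesis by (simp add: sum_product)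
qed

lemma psd_schur_complement:
  assumes "psd (Suc d) M" "0 < Re (M d d)"
  shows "psd d (\<lambda>i j. M i j - M i d * M d j / M d d)"
  unfolding psd_iff_sesq_form
proof
  fix v
  define b where "b = M d d"
  have cb: "cnj b = b" using psd_diag[OF assms(1), of d] unfolding b_def by (simp add: Reals_cnj_iff)
  have bnz: "b \<noteq> 0" using assms(2) b_def by auto
  define s where "s = (\<Sum>l<d. M d l * v l)"
  \<comment> \<open>\<open>w\<close> extends \<open>v\<close> by the coordinate minimising the form, leaving the Schur complement\<close>
  define w :: "nat \<Rightarrow> complex" where "w = (\<lambda>k. if k < d then v k else - (s / b))"
  have herm: "\<And>i. i < d \<Longrightarrow> M i d = cnj (M d i)" by (rule psd_hermitian[OF assms(1)]) auto
  have col_w: "(\<Sum>i<d. cnj (w i) * M i d) = cnj s" and col_v: "(\<Sum>i<d. cnj (v i) * M i d) = cnj s"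
    unfolding s_def w_def by (simp_all add: herm cnj_sum mult.commute)
  have row_w: "(\<Sum>j<d. M d j * w j) = s" unfolding s_def w_def by simp
  have "sesq_form (Suc d) M w w = sesq_form d M v v + cnj s * w d + cnj (w d) * s + cnj (w d) * b * w d"
    unfolding sesq_form_Suc col_w row_w b_def by (simp add: w_def cong: sesq_form_cong)
  also have "\<dots> = sesq_form d M v v - cnj s * s / b"
    using bnz cb by (simp add: w_def field_simps)
  also have "\<dots> = sesq_form d (\<lambda>i j. M i j - M i d * M d j / M d d) v v"
    unfolding sesq_form_rank_one_update col_v b_def s_def by simp
  finally show "sesq_form d (\<lambda>i j. M i j - M i d * M d j / M d d) v v \<in> \<real>
      \<and> 0 \<le> Re (sesq_form d (\<lambda>i j. M i j - M i d * M d j / M d d) v v)"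
    using psd_sesq_formD[OF assms(1), of w] by simp
qed

definition gram_factor :: "nat \<Rightarrow> (nat \<Rightarrow> nat \<Rightarrow> complex) \<Rightarrow> (nat \<Rightarrow> nat \<Rightarrow> complex) \<Rightarrow> bool" where
  "gram_factor d C M \<longleftrightarrow> (\<forall>i<d. \<forall>j<d. M i j = (\<Sum>r<d. cnj (C r i) * C r j))"

lemma gram_factor_extend_zero_corner:
  assumes "psd (Suc d) M" "M d d = 0" "gram_factor d C M"
  shows "gram_factor (Suc d) (\<lambda>r j. if r < d \<and> j < d then C r j else 0) M"
  unfolding gram_factor_def
proof (intro allI impI)
  fix i j assume ij: "i < Suc d" "j < Suc d"
  have row: "M d k = 0" if "k < Suc d" for k
    using psd_zero_diag_imp_zero_row[OF assms(1,2)] assms(2) that by (cases "k = d") auto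
  have col: "M k d = 0" if "k < Suc d" for k
    using psd_hermitian[OF assms(1), of d k] row[OF that] that by (metis complex_cnj_zero lessI)
  show "M i j = (\<Sum>r<Suc d. cnj (if r < d \<and> i < d then C r i else 0) * (if r < d \<and> j < d then C r j else 0))"
  proof (cases "i = d \<or> j = d")
    case True
    then show ?thesis using row[OF ij(2)] col[OF ij(1)] by auto
  next
    case False
    then show ?thesis using assms(3) ij unfolding gram_factor_def by simp
  qed
qed

lemma gram_factor_extend_pos_corner:
  assumes "psd (Suc d) M" "0 < Re (M d d)" "gram_factor d C (\<lambda>i j. M i j - M i d * M d j / M d d)"
  defines "C' \<equiv> \<lambda>r j. if r < d then (if j < d then C r j else 0) else M d j / of_real (sqrt (Re (M d d)))"
  shows "gram_factor (Suc d) C' M"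
  unfolding gram_factor_def
proof (intro allI impI)
  fix i j assume ij: "i < Suc d" "j < Suc d"
  have herm: "M i d = cnj (M d i)" by (rule psd_hermitian[OF assms(1)]) (use ij in auto)
  have "M d d = of_real (Re (M d d))"
    using psd_diag[OF assms(1), of d] by (simp add: complex_eq_iff complex_is_Real_iff)
  then have sq: "of_real (sqrt (Re (M d d))) * of_real (sqrt (Re (M d d))) = M d d"
    using assms(2) by (metis of_real_mult real_sqrt_mult_self abs_of_pos)
  \<comment> \<open>the new last row accounts for the rank-one part \<open>M i d M d j / M d d\<close>\<close>
  have "cnj (C' d i) * C' d j = cnj (M d i) * M d j / (of_real (sqrt (Re (M d d))) * of_real (sqrt (Re (M d d))))"
    by (simp add: C'_def)
  then have split: "(\<Sum>r<Suc d. cnj (C' r i) * C' r j) = (\<Sum>r<d. cnj (C' r i) * C' r j) + M i d * M d j / M d d"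
    unfolding sq herm by simp
  show "M i j = (\<Sum>r<Suc d. cnj (C' r i) * C' r j)"
  proof (cases "i < d \<and> j < d")
    case True
    then have "(\<Sum>r<d. cnj (C' r i) * C' r j) = M i j - M i d * M d j / M d d"
      using assms(3) by (simp add: C'_def gram_factor_def)
    then show ?thesis unfolding split by simp
  next
    case False
    then have "M i j = M i d * M d j / M d d"
      using ij assms(2) by (auto simp: less_Suc_eq)
    moreover have "(\<Sum>r<d. cnj (C' r i) * C' r j) = 0" using False by (auto simp: C'_def)
    ultimately show ?thesis unfolding split by simp
  qed
qed

lemma psd_factorization: "psd d M \<Longrightarrow> \<exists>C. gram_factor d C M"
proof (induction d arbitrary: M)
  case 0
  then show ?case by (simp add: gram_factor_def)
next
  case (Suc d)
  have "M d d \<in> \<real>" "0 \<le> Re (M d d)" using psd_diag[OF Suc.prems, of d] by auto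
  then consider "M d d = 0" | "0 < Re (M d d)"
    by (metis complex_eq_iff complex_is_Real_iff less_eq_real_def zero_complex.simps)
  then show ?case
  proof cases
    case 1
    then show ?thesis
      using Suc.IH[OF psd_Suc_imp_psd[OF Suc.prems]] gram_factor_extend_zero_corner[OF Suc.prems 1] by blast
  next
    case 2
    then show ?thesis
      using Suc.IH[OF psd_schur_complement[OF Suc.prems 2]] gram_factor_extend_pos_corner[OF Suc.prems 2] by blast
  qed
qed

lemma sesq_form_factor:
  assumes "gram_factor d C A"
  shows "sesq_form d A w v = (\<Sum>r<d. cnj (\<Sum>i<d. C r i * w i) * (\<Sum>k<d. C r k * v k))"
proof -
  have "sesq_form d A w v = (\<Sum>i<d. \<Sum>k<d. \<Sum>r<d. cnj (w i) * cnj (C r i) * C r k * v k)"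
    using assms unfolding sesq_form_def gram_factor_def
    by (simp add: sum_distrib_left sum_distrib_right algebra_simps)
  also have "\<dots> = (\<Sum>r<d. \<Sum>i<d. \<Sum>k<d. cnj (w i) * cnj (C r i) * C r k * v k)"
    by (subst sum.swap) (intro sum.cong refl sum.swap)
  also have "\<dots> = (\<Sum>r<d. cnj (\<Sum>i<d. C r i * w i) * (\<Sum>k<d. C r k * v k))"
    by (simp add: cnj_sum sum_distrib_left sum_distrib_right algebra_simps)
  finally show ?thesis .
qed

lemma sesq_form_cauchy_schwarz:
  assumes "psd d A"
  shows "(cmod (sesq_form d A w v))\<^sup>2 \<le> Re (sesq_form d A w w) * Re (sesq_form d A v v)"
proof -
  obtain C where C: "gram_factor d C A"
    using psd_factorization[OF assms] by blast
  have self: "Re (sesq_form d A u u) = (\<Sum>r<d. (cmod (\<Sum>k<d. C r k * u k))\<^sup>2)" for u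
    unfolding sesq_form_factor[OF C] cnj_mult_self by (simp add: Re_sum)
  have "(cmod (sesq_form d A w v))\<^sup>2
      \<le> (\<Sum>r<d. (cmod (cnj (\<Sum>i<d. C r i * w i)))\<^sup>2) * (\<Sum>r<d. (cmod (\<Sum>k<d. C r k * v k))\<^sup>2)"
    unfolding sesq_form_factor[OF C] by (rule cmod_sum_mult_squared_le)
  then show ?thesis unfolding self by (simp only: complex_mod_cnj)
qed

lemma sqnorm_mat_vec_le:
  assumes "psd d A" "psd d (\<lambda>i j. id_mat i j - A i j)"
  shows "sqnorm d (mat_vec d A v) \<le> Re (sesq_form d A v v)"
proof -
  define w where "w = mat_vec d A v"
  have wv: "sesq_form d A w v = of_real (sqnorm d w)"
    unfolding sesq_form_mat_vec sqnorm_def w_def by (simp add: cnj_mult_self)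
  have ww: "Re (sesq_form d A w w) \<le> sqnorm d w"
    using psd_sesq_formD[OF assms(2), of w] unfolding sesq_form_diff sesq_form_id by simp
  have vv: "0 \<le> Re (sesq_form d A v v)" using psd_sesq_formD[OF assms(1)] by simp
  have w0: "0 \<le> sqnorm d w" by (rule sqnorm_nonneg)
  have "sqnorm d w * sqnorm d w \<le> Re (sesq_form d A w w) * Re (sesq_form d A v v)"
    using sesq_form_cauchy_schwarz[OF assms(1), of w v] w0 unfolding wv by (simp add: power2_eq_square)
  also have "\<dots> \<le> sqnorm d w * Re (sesq_form d A v v)"
    using ww vv by (simp add: mult_right_mono)
  finally show ?thesis unfolding w_def[symmetric]
    using w0 vv by (cases "sqnorm d w = 0") (auto simp: mult_le_cancel_left)
qed

lemma povm_psd: "povm d A \<Longrightarrow> psd d (A a)"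
  unfolding povm_def by simp

lemma povm_sum_eq_id: "povm d A \<Longrightarrow> i < d \<Longrightarrow> j < d \<Longrightarrow> (\<Sum>a\<in>UNIV. A a i j) = id_mat i j"
  unfolding povm_def by simp

lemma povm_id_minus_psd:
  assumes "povm d A"
  shows "psd d (\<lambda>i j. id_mat i j - A a i j)"
  unfolding psd_iff_sesq_form
proof
  fix v
  have "sesq_form d (\<lambda>i j. id_mat i j - A a i j) v v
      = sesq_form d (\<lambda>i j. \<Sum>a'\<in>UNIV. A a' i j) v v - sesq_form d (A a) v v"
    unfolding sesq_form_diff using povm_sum_eq_id[OF assms] by (intro arg_cong2[where f = "(-)"] sesq_form_cong) auto
  also have "\<dots> = (\<Sum>a'\<in>UNIV - {a}. sesq_form d (A a') v v)"
    unfolding sesq_form_sum by (simp add: sum.remove[where x = a])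
  finally show "sesq_form d (\<lambda>i j. id_mat i j - A a i j) v v \<in> \<real>
      \<and> 0 \<le> Re (sesq_form d (\<lambda>i j. id_mat i j - A a i j) v v)"
    using psd_sesq_formD[OF povm_psd[OF assms]] by (auto intro!: sum_in_Reals sum_nonneg simp: Re_sum)
qed

lemma povm_sum_sqnorm_mat_vec_le:
  assumes "povm d A"
  shows "(\<Sum>a\<in>UNIV. sqnorm d (mat_vec d (A a) w)) \<le> sqnorm d w"
proof -
  have "(\<Sum>a\<in>UNIV. sqnorm d (mat_vec d (A a) w)) \<le> (\<Sum>a\<in>UNIV. Re (sesq_form d (A a) w w))"
    by (intro sum_mono sqnorm_mat_vec_le povm_psd[OF assms] povm_id_minus_psd[OF assms])
  also have "\<dots> = Re (sesq_form d (\<lambda>i j. \<Sum>a\<in>UNIV. A a i j) w w)"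
    unfolding sesq_form_sum by (simp add: Re_sum)
  also have "\<dots> = Re (sesq_form d id_mat w w)"
    using povm_sum_eq_id[OF assms] by (intro arg_cong[where f = Re] sesq_form_cong) auto
  finally show ?thesis unfolding sesq_form_id by simp
qed

section \<open>Expectations in a bipartite state\<close>

lemma tensor_expect_factor:
  assumes "gram_factor d C B"
  shows "tensor_expect d psi A B
    = (\<Sum>r<d. sesq_form d A (\<lambda>i. \<Sum>j<d. C r j * psi i j) (\<lambda>i. \<Sum>j<d. C r j * psi i j))"
proof -
  let ?T = "\<lambda>i j k l r. cnj (psi i j) * cnj (C r j) * A i k * C r l * psi k l"
  have "tensor_expect d psi A B = (\<Sum>i<d. \<Sum>j<d. \<Sum>k<d. \<Sum>l<d. \<Sum>r<d. ?T i j k l r)"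
    using assms unfolding tensor_expect_def gram_factor_def by (simp add: sum_distrib_left sum_distrib_right algebra_simps)
  also have "\<dots> = (\<Sum>i<d. \<Sum>j<d. \<Sum>k<d. \<Sum>r<d. \<Sum>l<d. ?T i j k l r)"
    by (rule sum.cong[OF refl], rule sum.cong[OF refl], rule sum.cong[OF refl], rule sum.swap)
  also have "\<dots> = (\<Sum>i<d. \<Sum>j<d. \<Sum>r<d. \<Sum>k<d. \<Sum>l<d. ?T i j k l r)"
    by (rule sum.cong[OF refl], rule sum.cong[OF refl], rule sum.swap)
  also have "\<dots> = (\<Sum>i<d. \<Sum>r<d. \<Sum>j<d. \<Sum>k<d. \<Sum>l<d. ?T i j k l r)"
    by (rule sum.cong[OF refl], rule sum.swap)
  also have "\<dots> = (\<Sum>r<d. \<Sum>i<d. \<Sum>j<d. \<Sum>k<d. \<Sum>l<d. ?T i j k l r)"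
    by (rule sum.swap)
  also have "\<dots> = (\<Sum>r<d. \<Sum>i<d. \<Sum>k<d. \<Sum>j<d. \<Sum>l<d. ?T i j k l r)"
    by (rule sum.cong[OF refl], rule sum.cong[OF refl], rule sum.swap)
  also have "\<dots> = (\<Sum>r<d. sesq_form d A (\<lambda>i. \<Sum>j<d. C r j * psi i j) (\<lambda>i. \<Sum>j<d. C r j * psi i j))"
    unfolding sesq_form_def by (simp add: cnj_sum sum_distrib_left sum_distrib_right algebra_simps)
  finally show ?thesis .
qed

lemma tensor_expect_nonneg:
  assumes "psd d A" "psd d B"
  shows "tensor_expect d psi A B \<in> \<real> \<and> 0 \<le> Re (tensor_expect d psi A B)"
proof -
  obtain C where C: "gram_factor d C B"
    using psd_factorization[OF assms(2)] by blast
  show ?thesis unfolding tensor_expect_factor[OF C]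
    using psd_sesq_formD[OF assms(1)] by (auto intro!: sum_in_Reals sum_nonneg simp: Re_sum)
qed

lemma tensor_expect_cong:
  assumes "\<And>i k. i < d \<Longrightarrow> k < d \<Longrightarrow> A i k = A' i k" "\<And>j l. j < d \<Longrightarrow> l < d \<Longrightarrow> B j l = B' j l"
  shows "tensor_expect d psi A B = tensor_expect d psi A' B'"
  unfolding tensor_expect_def using assms by (intro sum.cong refl) auto

lemma tensor_expect_sum_left:
  "(\<Sum>a\<in>S. tensor_expect d psi (A a) B) = tensor_expect d psi (\<lambda>i k. \<Sum>a\<in>S. A a i k) B"
  unfolding tensor_expect_def by (simp add: sum_distrib_left sum_distrib_right sum.swap[where A = S])

lemma tensor_expect_sum_right:
  "(\<Sum>b\<in>S. tensor_expect d psi A (B b)) = tensor_expect d psi A (\<lambda>j l. \<Sum>b\<in>S. B b j l)"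
  unfolding tensor_expect_def by (simp add: sum_distrib_left sum_distrib_right sum.swap[where A = S])

lemma tensor_expect_id_id:
  assumes "unit_bipartite d psi"
  shows "tensor_expect d psi id_mat id_mat = 1"
proof -
  have "tensor_expect d psi id_mat id_mat = (\<Sum>i<d. \<Sum>j<d. cnj (psi i j) * psi i j)"
    unfolding tensor_expect_def
  proof (intro sum.cong refl)
    fix i j assume "i \<in> {..<d}" "j \<in> {..<d}"
    then show "(\<Sum>k<d. \<Sum>l<d. cnj (psi i j) * id_mat i k * id_mat j l * psi k l) = cnj (psi i j) * psi i j"
      by (subst sum_lessThan_one_supp[where i = i], simp, simp, subst sum_lessThan_one_supp[where i = j]) auto
  qed
  also have "\<dots> = of_real (\<Sum>i<d. \<Sum>j<d. (cmod (psi i j))\<^sup>2)"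
    by (simp only: cnj_mult_self of_real_sum)
  also have "\<dots> = 1"
    using assms unfolding unit_bipartite_def by simp
  finally show ?thesis .
qed

lemma tensor_expect_transpose:
  "tensor_expect d (\<lambda>i j. psi j i) B A = tensor_expect d psi A B"
proof -
  have "tensor_expect d (\<lambda>i j. psi j i) B A
      = (\<Sum>j<d. \<Sum>i<d. \<Sum>k<d. \<Sum>l<d. cnj (psi j i) * B i k * A j l * psi l k)"
    unfolding tensor_expect_def by (rule sum.swap)
  also have "\<dots> = (\<Sum>j<d. \<Sum>i<d. \<Sum>l<d. \<Sum>k<d. cnj (psi j i) * B i k * A j l * psi l k)"
    by (rule sum.cong[OF refl], rule sum.cong[OF refl], rule sum.swap)
  finally show ?thesis unfolding tensor_expect_def by (simp add: ac_simps)
qed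

lemma unit_bipartite_transpose: "unit_bipartite d psi \<Longrightarrow> unit_bipartite d (\<lambda>i j. psi j i)"
  unfolding unit_bipartite_def by (subst sum.swap) simp

text \<open>\<open>(A \<otimes> 1)\<psi>\<close> and \<open>(1 \<otimes> B)\<psi>\<close>, with \<open>\<psi> i j\<close> the coefficient of \<open>e\<^sub>i \<otimes> e\<^sub>j\<close> as in \<open>tensor_expect\<close>.\<close>
definition tensor_left :: "nat \<Rightarrow> (nat \<Rightarrow> nat \<Rightarrow> complex) \<Rightarrow> (nat \<Rightarrow> nat \<Rightarrow> complex) \<Rightarrow> nat \<Rightarrow> nat \<Rightarrow> complex" where
  "tensor_left d A psi = (\<lambda>i j. \<Sum>k<d. A i k * psi k j)"

definition tensor_right :: "nat \<Rightarrow> (nat \<Rightarrow> nat \<Rightarrow> complex) \<Rightarrow> (nat \<Rightarrow> nat \<Rightarrow> complex) \<Rightarrow> nat \<Rightarrow> nat \<Rightarrow> complex" where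
  "tensor_right d B psi = (\<lambda>i j. \<Sum>l<d. B j l * psi i l)"

definition bisqnorm :: "nat \<Rightarrow> (nat \<Rightarrow> nat \<Rightarrow> complex) \<Rightarrow> real" where
  "bisqnorm d psi = (\<Sum>i<d. \<Sum>j<d. (cmod (psi i j))\<^sup>2)"

lemma bisqnorm_nonneg: "0 \<le> bisqnorm d psi"
  unfolding bisqnorm_def by (intro sum_nonneg) auto

lemma unit_bipartite_iff_bisqnorm: "unit_bipartite d psi \<longleftrightarrow> bisqnorm d psi = 1"
  unfolding unit_bipartite_def bisqnorm_def ..

lemma tensor_expect_eq_inner:
  assumes "psd d A"
  shows "tensor_expect d psi A B = (\<Sum>i<d. \<Sum>j<d. cnj (tensor_left d A psi i j) * tensor_right d B psi i j)"
proof -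
  let ?t = "\<lambda>i j k l. cnj (psi i j) * A i k * B j l * psi k l"
  have "(\<Sum>i<d. \<Sum>j<d. cnj (tensor_left d A psi i j) * tensor_right d B psi i j)
      = (\<Sum>i<d. \<Sum>j<d. \<Sum>k<d. \<Sum>l<d. ?t k j i l)"
  proof (intro sum.cong refl)
    fix i j assume i: "i \<in> {..<d}"
    have "cnj (tensor_left d A psi i j) * tensor_right d B psi i j
        = (\<Sum>k<d. \<Sum>l<d. cnj (A i k) * cnj (psi k j) * (B j l * psi i l))"
      unfolding tensor_left_def tensor_right_def
      by (simp add: cnj_sum sum_distrib_left sum_distrib_right) (rule sum.swap)
    also have "\<dots> = (\<Sum>k<d. \<Sum>l<d. ?t k j i l)"
      using psd_hermitian[OF assms, of i] i by (intro sum.cong refl) (simp add: algebra_simps)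
    finally show "cnj (tensor_left d A psi i j) * tensor_right d B psi i j = (\<Sum>k<d. \<Sum>l<d. ?t k j i l)" .
  qed
  also have "\<dots> = (\<Sum>i<d. \<Sum>k<d. \<Sum>j<d. \<Sum>l<d. ?t k j i l)"
    by (rule sum.cong[OF refl], rule sum.swap)
  also have "\<dots> = (\<Sum>k<d. \<Sum>i<d. \<Sum>j<d. \<Sum>l<d. ?t k j i l)"
    by (rule sum.swap)
  also have "\<dots> = (\<Sum>k<d. \<Sum>j<d. \<Sum>i<d. \<Sum>l<d. ?t k j i l)"
    by (rule sum.cong[OF refl], rule sum.swap)
  finally show ?thesis unfolding tensor_expect_def ..
qed

lemma cmod_tensor_expect_le:
  assumes "psd d A"
  shows "cmod (tensor_expect d psi A B)
    \<le> sqrt (bisqnorm d (tensor_left d A psi)) * sqrt (bisqnorm d (tensor_right d B psi))"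
proof -
  have double: "(\<Sum>i<d. \<Sum>j<d. f i j) = (\<Sum>(i, j)\<in>{..<d} \<times> {..<d}. f i j)" for f :: "nat \<Rightarrow> nat \<Rightarrow> 'c::comm_monoid_add"
    by (simp add: sum.cartesian_product)
  have "(cmod (tensor_expect d psi A B))\<^sup>2
      \<le> bisqnorm d (tensor_left d A psi) * bisqnorm d (tensor_right d B psi)"
    unfolding tensor_expect_eq_inner[OF assms] bisqnorm_def double
    using cmod_sum_mult_squared_le[of "\<lambda>(i, j). cnj (tensor_left d A psi i j)" "\<lambda>(i, j). tensor_right d B psi i j"]
    by (simp add: case_prod_beta)
  then show ?thesis
    by (metis real_le_rsqrt real_sqrt_mult)
qed

lemma povm_sum_bisqnorm_tensor_left_le:
  assumes "povm d A"
  shows "(\<Sum>a\<in>UNIV. bisqnorm d (tensor_left d (A a) psi)) \<le> bisqnorm d psi"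
proof -
  have col: "bisqnorm d (tensor_left d (A a) psi) = (\<Sum>j<d. sqnorm d (mat_vec d (A a) (\<lambda>k. psi k j)))" for a
    unfolding bisqnorm_def sqnorm_def mat_vec_def tensor_left_def by (rule sum.swap)
  have "(\<Sum>a\<in>UNIV. bisqnorm d (tensor_left d (A a) psi))
      = (\<Sum>j<d. \<Sum>a\<in>UNIV. sqnorm d (mat_vec d (A a) (\<lambda>k. psi k j)))"
    unfolding col by (rule sum.swap)
  also have "\<dots> \<le> (\<Sum>j<d. sqnorm d (\<lambda>k. psi k j))"
    by (intro sum_mono povm_sum_sqnorm_mat_vec_le[OF assms])
  also have "\<dots> = bisqnorm d psi"
    unfolding bisqnorm_def sqnorm_def by (rule sum.swap)
  finally show ?thesis .
qed

lemma povm_sum_bisqnorm_tensor_right_le: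
  assumes "povm d B"
  shows "(\<Sum>b\<in>UNIV. bisqnorm d (tensor_right d (B b) psi)) \<le> bisqnorm d psi"
proof -
  have row: "bisqnorm d (tensor_right d (B b) psi) = (\<Sum>i<d. sqnorm d (mat_vec d (B b) (psi i)))" for b
    unfolding bisqnorm_def sqnorm_def mat_vec_def tensor_right_def ..
  have "(\<Sum>b\<in>UNIV. bisqnorm d (tensor_right d (B b) psi)) = (\<Sum>i<d. \<Sum>b\<in>UNIV. sqnorm d (mat_vec d (B b) (psi i)))"
    unfolding row by (rule sum.swap)
  also have "\<dots> \<le> (\<Sum>i<d. sqnorm d (psi i))"
    by (intro sum_mono povm_sum_sqnorm_mat_vec_le[OF assms])
  also have "\<dots> = bisqnorm d psi"
    unfolding bisqnorm_def sqnorm_def ..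
  finally show ?thesis .
qed

section \<open>Classical correlations\<close>

definition game_payoff ::
  "('x::finite \<Rightarrow> 'y::finite \<Rightarrow> 'a::finite \<Rightarrow> 'b::finite \<Rightarrow> real) \<Rightarrow> ('x \<Rightarrow> 'y \<Rightarrow> 'a \<Rightarrow> 'b \<Rightarrow> real) \<Rightarrow> real" where
  "game_payoff G P = (\<Sum>x\<in>UNIV. \<Sum>y\<in>UNIV. \<Sum>a\<in>UNIV. \<Sum>b\<in>UNIV. G x y a b * P x y a b)"

definition swap_players :: "('x \<Rightarrow> 'y \<Rightarrow> 'a \<Rightarrow> 'b \<Rightarrow> 'c) \<Rightarrow> 'y \<Rightarrow> 'x \<Rightarrow> 'b \<Rightarrow> 'a \<Rightarrow> 'c" where
  "swap_players P = (\<lambda>y x b a. P x y a b)"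

lemma swap_players_swap_players [simp]: "swap_players (swap_players P) = P"
  unfolding swap_players_def ..

lemma cond_dist_le_1: "cond_dist P \<Longrightarrow> P x a \<le> 1"
  unfolding cond_dist_def by (metis member_le_sum finite UNIV_I)

lemma cond_dist_uniform: "cond_dist (\<lambda>(x::'x) (a::'a::finite). 1 / real CARD('a))"
  unfolding cond_dist_def by simp

lemma classical_corr_mixture:
  fixes lam :: "'i::finite \<Rightarrow> real" and P1 :: "'i \<Rightarrow> 'x \<Rightarrow> 'a::finite \<Rightarrow> real"
    and P2 :: "'i \<Rightarrow> 'y \<Rightarrow> 'b::finite \<Rightarrow> real"
  assumes "\<And>i. 0 \<le> lam i" "(\<Sum>i\<in>UNIV. lam i) = 1" "\<And>i. cond_dist (P1 i)" "\<And>i. cond_dist (P2 i)"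
  shows "(\<lambda>x y a b. \<Sum>i\<in>UNIV. lam i * P1 i x a * P2 i y b) \<in> classical_corr"
proof -
  obtain e where e: "bij_betw e {..<CARD('i)} (UNIV :: 'i set)"
    using ex_bij_betw_nat_finite[of "UNIV :: 'i set"] unfolding atLeast0LessThan by auto
  have reindex: "(\<Sum>j<CARD('i). f (e j)) = (\<Sum>i\<in>UNIV. f i)" for f :: "'i \<Rightarrow> real"
    by (rule sum.reindex_bij_betw[OF e])
  show ?thesis unfolding classical_corr_def
  proof (intro CollectI exI conjI)
    show "(\<lambda>x y a b. \<Sum>i\<in>UNIV. lam i * P1 i x a * P2 i y b)
        = (\<lambda>x y a b. \<Sum>j<CARD('i). lam (e j) * P1 (e j) x a * P2 (e j) y b)"
      by (intro ext) (rule reindex[symmetric])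
  qed (use assms reindex[of lam] in auto)
qed

lemma classical_corr_product:
  assumes "cond_dist P1" "cond_dist P2"
  shows "(\<lambda>x y a b. P1 x a * P2 y b) \<in> classical_corr"
  using classical_corr_mixture[of "\<lambda>_::unit. 1" "\<lambda>_. P1" "\<lambda>_. P2"] assms by simp

lemma classical_corr_bounded:
  assumes "P \<in> classical_corr"
  shows "0 \<le> P x y a b \<and> P x y a b \<le> 1"
proof -
  obtain k :: nat and lam P1 P2 where lam: "\<forall>i<k. 0 \<le> lam i" "(\<Sum>i<k. lam i) = 1"
    and dist: "\<forall>i<k. cond_dist (P1 i) \<and> cond_dist (P2 i)"
    and P: "P = (\<lambda>x y a b. \<Sum>i<k. lam i * P1 i x a * P2 i y b)"
    using assms unfolding classical_corr_def by blast
  have factors: "0 \<le> P1 i x a * P2 i y b \<and> P1 i x a * P2 i y b \<le> 1" if "i < k" for i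
  proof -
    have "cond_dist (P1 i)" "cond_dist (P2 i)" using dist that by auto
    then show ?thesis using cond_dist_le_1 unfolding cond_dist_def by (metis mult_le_one mult_nonneg_nonneg)
  qed
  have "0 \<le> P x y a b" unfolding P using lam(1) factors by (auto intro!: sum_nonneg simp: mult.assoc)
  moreover have "P x y a b \<le> (\<Sum>i<k. lam i)" unfolding P
    using lam(1) factors by (intro sum_mono) (simp add: mult.assoc mult_left_le)
  ultimately show ?thesis using lam(2) by simp
qed

lemma classical_corr_swap_players:
  assumes "P \<in> classical_corr"
  shows "swap_players P \<in> classical_corr"
proof -
  obtain k :: nat and lam P1 P2 where "\<forall>i<k. 0 \<le> lam i" "(\<Sum>i<k. lam i) = 1"
    "\<forall>i<k. cond_dist (P1 i) \<and> cond_dist (P2 i)" "P = (\<lambda>x y a b. \<Sum>i<k. lam i * P1 i x a * P2 i y b)"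
    using assms unfolding classical_corr_def by blast
  then show ?thesis unfolding classical_corr_def swap_players_def
    by (intro CollectI exI[of _ k] exI[of _ lam] exI[of _ P2] exI[of _ P1]) (auto simp: ac_simps)
qed

lemma bdd_above_classical_payoffs:
  fixes G :: "'x::finite \<Rightarrow> 'y::finite \<Rightarrow> 'a::finite \<Rightarrow> 'b::finite \<Rightarrow> real"
  shows "bdd_above ((\<lambda>P. \<bar>game_payoff G P\<bar>) ` classical_corr)"
proof (rule bdd_aboveI2)
  fix P :: "'x \<Rightarrow> 'y \<Rightarrow> 'a \<Rightarrow> 'b \<Rightarrow> real"
  assume P: "P \<in> classical_corr"
  have "\<bar>game_payoff G P\<bar> \<le> (\<Sum>x\<in>UNIV. \<Sum>y\<in>UNIV. \<Sum>a\<in>UNIV. \<Sum>b\<in>UNIV. \<bar>G x y a b * P x y a b\<bar>)"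
    unfolding game_payoff_def by (intro order_trans[OF sum_abs] sum_mono)+ simp
  also have "\<dots> \<le> (\<Sum>x\<in>UNIV. \<Sum>y\<in>UNIV. \<Sum>a\<in>UNIV. \<Sum>b\<in>UNIV. \<bar>G x y a b\<bar>)"
    using classical_corr_bounded[OF P] by (intro sum_mono) (simp add: abs_mult mult_left_le)
  finally show "\<bar>game_payoff G P\<bar> \<le> (\<Sum>x\<in>UNIV. \<Sum>y\<in>UNIV. \<Sum>a\<in>UNIV. \<Sum>b\<in>UNIV. \<bar>G x y a b\<bar>)" .
qed

lemma abs_game_payoff_le_classical_value:
  assumes "P \<in> classical_corr"
  shows "\<bar>game_payoff G P\<bar> \<le> classical_value G"
  unfolding classical_value_def game_payoff_def[symmetric]
  by (rule cSup_upper[OF _ bdd_above_classical_payoffs]) (use assms in auto)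

lemma game_payoff_le_classical_value:
  assumes "P \<in> classical_corr"
  shows "game_payoff G P \<le> classical_value G"
  using abs_game_payoff_le_classical_value[OF assms] by (rule order_trans[OF abs_ge_self])

lemma classical_value_nonneg: "0 \<le> classical_value G"
  using abs_game_payoff_le_classical_value[OF classical_corr_product[OF cond_dist_uniform cond_dist_uniform]]
  by (rule order_trans[OF abs_ge_zero])

lemma game_payoff_swap_players: "game_payoff (swap_players G) (swap_players P) = game_payoff G P"
proof -
  have "game_payoff (swap_players G) (swap_players P)
      = (\<Sum>x\<in>UNIV. \<Sum>y\<in>UNIV. \<Sum>b\<in>UNIV. \<Sum>a\<in>UNIV. G x y a b * P x y a b)"
    unfolding game_payoff_def swap_players_def by (rule sum.swap)
  also have "\<dots> = game_payoff G P"
    unfolding game_payoff_def by (rule sum.cong[OF refl], rule sum.cong[OF refl], rule sum.swap)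
  finally show ?thesis .
qed

lemma classical_value_swap_players: "classical_value (swap_players G) = classical_value G"
proof -
  have "(\<lambda>P. \<bar>game_payoff (swap_players G) P\<bar>) ` classical_corr = (\<lambda>P. \<bar>game_payoff G P\<bar>) ` classical_corr"
  proof (intro equalityI subsetI)
    fix v assume "v \<in> (\<lambda>P. \<bar>game_payoff (swap_players G) P\<bar>) ` classical_corr"
    then obtain P where P: "P \<in> classical_corr" "v = \<bar>game_payoff (swap_players G) P\<bar>" by blast
    then have "v = \<bar>game_payoff G (swap_players P)\<bar>"
      using game_payoff_swap_players[of G "swap_players P"] by simp
    then show "v \<in> (\<lambda>P. \<bar>game_payoff G P\<bar>) ` classical_corr"
      using classical_corr_swap_players[OF P(1)] by blast
  next
    fix v assume "v \<in> (\<lambda>P. \<bar>game_payoff G P\<bar>) ` classical_corr"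
    then obtain P where P: "P \<in> classical_corr" "v = \<bar>game_payoff G P\<bar>" by blast
    then have "v = \<bar>game_payoff (swap_players G) (swap_players P)\<bar>"
      using game_payoff_swap_players[of G P] by simp
    then show "v \<in> (\<lambda>P. \<bar>game_payoff (swap_players G) P\<bar>) ` classical_corr"
      using classical_corr_swap_players[OF P(1)] by blast
  qed
  then show ?thesis unfolding classical_value_def game_payoff_def by simp
qed

text \<open>Alice answers \<open>a\<close> with probability \<open>r a\<close>, ignoring her question; Bob samples \<open>b\<close> from its
  conditional distribution given \<open>a\<close> and his question.\<close>
lemma classical_corr_of_marginal:
  fixes p :: "'y \<Rightarrow> 'a::finite \<Rightarrow> 'b::finite \<Rightarrow> real" and r :: "'a \<Rightarrow> real"
  assumes nonneg: "\<And>y a b. 0 \<le> p y a b" and marginal: "\<And>y a. (\<Sum>b\<in>UNIV. p y a b) = r a"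
    and total: "(\<Sum>a\<in>UNIV. r a) = 1"
  shows "(\<lambda>(x::'x) y a b. p y a b) \<in> classical_corr"
proof -
  define q where "q = (\<lambda>a0 y b. if r a0 > 0 then p y a0 b / r a0 else 1 / real CARD('b))"
  have r_nonneg: "0 \<le> r a" for a
    using marginal[of undefined a] nonneg by (metis sum_nonneg)
  have p_zero: "p y a b = 0" if "r a = 0" for y a b
    using member_le_sum[of b UNIV "p y a"] nonneg marginal[of y a] that by (simp add: order_antisym)
  have "cond_dist (q a0)" for a0
    using nonneg marginal unfolding cond_dist_def q_def
    by (cases "r a0 > 0") (simp_all add: sum_divide_distrib[symmetric])
  moreover have "cond_dist (\<lambda>(x::'x) a. if a = a0 then 1 else 0)" for a0
    unfolding cond_dist_def by simp
  ultimately have "(\<lambda>(x::'x) y a b. \<Sum>a0\<in>UNIV. r a0 * (if a = a0 then 1 else 0) * q a0 y b) \<in> classical_corr"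
    by (intro classical_corr_mixture r_nonneg total)
  moreover have "(\<Sum>a0\<in>UNIV. r a0 * (if a = a0 then 1 else 0) * q a0 y b) = p y a b" for a b y
  proof -
    have "(\<Sum>a0\<in>UNIV. r a0 * (if a = a0 then 1 else 0) * q a0 y b) = r a * q a y b"
      by (simp add: if_distrib if_distribR cong: if_cong)
    also have "\<dots> = p y a b"
      using r_nonneg[of a] p_zero[of a y b] unfolding q_def by (auto simp: less_le)
    finally show ?thesis .
  qed
  ultimately show ?thesis by simp
qed

text \<open>Padding \<open>\<alpha>\<^sup>2\<close> up to a probability distribution gives a strategy for Alice; Bob answers uniformly.\<close>
lemma game_payoff_square_le_classical_value:
  fixes G :: "'x::finite \<Rightarrow> 'y::finite \<Rightarrow> 'a::finite \<Rightarrow> 'b::finite \<Rightarrow> real"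
    and \<alpha> :: "'x \<Rightarrow> 'a \<Rightarrow> real"
  assumes G_nonneg: "\<And>x y a b. 0 \<le> G x y a b" and \<alpha>: "\<And>x. (\<Sum>a\<in>UNIV. (\<alpha> x a)\<^sup>2) \<le> 1"
  shows "game_payoff G (\<lambda>x y a b. (\<alpha> x a)\<^sup>2) \<le> real CARD('b) * classical_value G"
proof -
  define P1 where "P1 = (\<lambda>x a. (\<alpha> x a)\<^sup>2 + (1 - (\<Sum>a\<in>UNIV. (\<alpha> x a)\<^sup>2)) / real CARD('a))"
  have "cond_dist P1"
    unfolding cond_dist_def P1_def using \<alpha> by (simp add: sum.distrib add_nonneg_nonneg)
  then have corr: "(\<lambda>x (y::'y) a (b::'b). P1 x a * (1 / real CARD('b))) \<in> classical_corr"
    by (rule classical_corr_product[OF _ cond_dist_uniform])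
  have "game_payoff G (\<lambda>x y a b. (\<alpha> x a)\<^sup>2) \<le> game_payoff G (\<lambda>x y a b. P1 x a)"
    unfolding game_payoff_def using G_nonneg \<alpha> by (intro sum_mono mult_left_mono) (auto simp: P1_def)
  also have "\<dots> = real CARD('b) * game_payoff G (\<lambda>x y a b. P1 x a * (1 / real CARD('b)))"
    unfolding game_payoff_def by (simp add: sum_distrib_left)
  also have "\<dots> \<le> real CARD('b) * classical_value G"
    by (intro mult_left_mono game_payoff_le_classical_value[OF corr]) simp
  finally show ?thesis .
qed

text \<open>AM-GM with the weight \<open>t = \<surd>(|A|/|B|)\<close> balancing the two product strategies.\<close>
lemma game_payoff_product_le_classical_value:
  fixes G :: "'x::finite \<Rightarrow> 'y::finite \<Rightarrow> 'a::finite \<Rightarrow> 'b::finite \<Rightarrow> real"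
    and \<alpha> :: "'x \<Rightarrow> 'a \<Rightarrow> real" and \<beta> :: "'y \<Rightarrow> 'b \<Rightarrow> real"
  assumes G_nonneg: "\<And>x y a b. 0 \<le> G x y a b" and \<alpha>: "\<And>x. (\<Sum>a\<in>UNIV. (\<alpha> x a)\<^sup>2) \<le> 1" and \<beta>: "\<And>y. (\<Sum>b\<in>UNIV. (\<beta> y b)\<^sup>2) \<le> 1"
  shows "game_payoff G (\<lambda>x y a b. \<alpha> x a * \<beta> y b) \<le> sqrt (real (CARD('a) * CARD('b))) * classical_value G"
proof -
  define t where "t = sqrt (real CARD('a)) / sqrt (real CARD('b))"
  have t: "t > 0" unfolding t_def by simp
  have amgm: "p * q \<le> t / 2 * p\<^sup>2 + 1 / (2 * t) * q\<^sup>2" for p q :: real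
  proof -
    have "0 \<le> (t * p - q)\<^sup>2" by simp
    then show ?thesis using t by (simp add: field_simps power2_eq_square)
  qed
  have left: "game_payoff G (\<lambda>x y a b. (\<alpha> x a)\<^sup>2) \<le> real CARD('b) * classical_value G"
    by (rule game_payoff_square_le_classical_value[OF G_nonneg \<alpha>])
  have "game_payoff (swap_players G) (swap_players (\<lambda>x y a b. (\<beta> y b)\<^sup>2)) \<le> real CARD('a) * classical_value G"
    using G_nonneg \<beta> game_payoff_square_le_classical_value[of "swap_players G" \<beta>]
    unfolding classical_value_swap_players by (simp add: swap_players_def)
  then have right: "game_payoff G (\<lambda>x y a b. (\<beta> y b)\<^sup>2) \<le> real CARD('a) * classical_value G"
    unfolding game_payoff_swap_players .
  have "game_payoff G (\<lambda>x y a b. \<alpha> x a * \<beta> y b)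
      \<le> game_payoff G (\<lambda>x y a b. t / 2 * (\<alpha> x a)\<^sup>2 + 1 / (2 * t) * (\<beta> y b)\<^sup>2)"
    unfolding game_payoff_def using G_nonneg amgm by (intro sum_mono mult_left_mono) auto
  also have "\<dots> = t / 2 * game_payoff G (\<lambda>x y a b. (\<alpha> x a)\<^sup>2) + 1 / (2 * t) * game_payoff G (\<lambda>x y a b. (\<beta> y b)\<^sup>2)"
    unfolding game_payoff_def by (simp add: distrib_left sum.distrib sum_distrib_left algebra_simps)
  also have "\<dots> \<le> t / 2 * (real CARD('b) * classical_value G) + 1 / (2 * t) * (real CARD('a) * classical_value G)"
    using t by (intro add_mono mult_left_mono left right) auto
  also have "\<dots> = (t / 2 * real CARD('b) + 1 / (2 * t) * real CARD('a)) * classical_value G"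
    by (simp add: algebra_simps)
  also have "t / 2 * real CARD('b) + 1 / (2 * t) * real CARD('a) = sqrt (real (CARD('a) * CARD('b)))"
    unfolding t_def by (simp add: field_simps real_sqrt_mult)
  finally show ?thesis .
qed

section \<open>Quantum correlations\<close>

definition quantum_payoff ::
  "('x::finite \<Rightarrow> 'y::finite \<Rightarrow> 'a::finite \<Rightarrow> 'b::finite \<Rightarrow> real) \<Rightarrow> nat \<Rightarrow> (nat \<Rightarrow> nat \<Rightarrow> complex)
    \<Rightarrow> ('x \<Rightarrow> 'a \<Rightarrow> nat \<Rightarrow> nat \<Rightarrow> complex) \<Rightarrow> ('y \<Rightarrow> 'b \<Rightarrow> nat \<Rightarrow> nat \<Rightarrow> complex) \<Rightarrow> complex" where
  "quantum_payoff G d psi A B = (\<Sum>x\<in>UNIV. \<Sum>y\<in>UNIV. \<Sum>a\<in>UNIV. \<Sum>b\<in>UNIV.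
      complex_of_real (G x y a b) * tensor_expect d psi (A x a) (B y b))"

locale quantum_strategy =
  fixes d :: nat and psi :: "nat \<Rightarrow> nat \<Rightarrow> complex"
    and A :: "'x::finite \<Rightarrow> 'a::finite \<Rightarrow> nat \<Rightarrow> nat \<Rightarrow> complex"
    and B :: "'y::finite \<Rightarrow> 'b::finite \<Rightarrow> nat \<Rightarrow> nat \<Rightarrow> complex"
  assumes unit: "unit_bipartite d psi" and povm_A: "povm d (A x)" and povm_B: "povm d (B y)"

lemma quantum_value_le:
  fixes G :: "'x::finite \<Rightarrow> 'y::finite \<Rightarrow> 'a::finite \<Rightarrow> 'b::finite \<Rightarrow> real"
  assumes "\<And>d psi (A :: 'x \<Rightarrow> 'a \<Rightarrow> nat \<Rightarrow> nat \<Rightarrow> complex) (B :: 'y \<Rightarrow> 'b \<Rightarrow> nat \<Rightarrow> nat \<Rightarrow> complex).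
      quantum_strategy d psi A B \<Longrightarrow> cmod (quantum_payoff G d psi A B) \<le> c"
  shows "quantum_value G \<le> c"
proof -
  let ?S = "{cmod (quantum_payoff G d psi A B) | d psi (A :: 'x \<Rightarrow> 'a \<Rightarrow> nat \<Rightarrow> nat \<Rightarrow> complex)
      (B :: 'y \<Rightarrow> 'b \<Rightarrow> nat \<Rightarrow> nat \<Rightarrow> complex). quantum_strategy d psi A B}"
  have value_eq: "quantum_value G = Sup ?S"
    unfolding quantum_value_def quantum_payoff_def quantum_strategy_def ..
  have "psd 1 (\<lambda>i j. if P then 1 else 0)" for P
    unfolding psd_def by (simp add: cnj_mult_self)
  then have "quantum_strategy 1 (\<lambda>i j. 1) (\<lambda>x a i j. if a = undefined then 1 else 0)
      (\<lambda>y b i j. if b = undefined then 1 else 0)"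
    unfolding quantum_strategy_def unit_bipartite_def povm_def by simp
  then have "?S \<noteq> {}" by blast
  then show ?thesis unfolding value_eq by (rule cSup_least) (use assms in blast)
qed

context quantum_strategy
begin

definition corr :: "'x \<Rightarrow> 'y \<Rightarrow> 'a \<Rightarrow> 'b \<Rightarrow> real" where
  "corr x y a b = Re (tensor_expect d psi (A x a) (B y b))"

lemma tensor_expect_eq_corr: "tensor_expect d psi (A x a) (B y b) = of_real (corr x y a b)"
  using tensor_expect_nonneg[OF povm_psd[OF povm_A] povm_psd[OF povm_B]]
  unfolding corr_def by (simp add: complex_is_Real_iff complex_eq_iff)

lemma corr_nonneg: "0 \<le> corr x y a b"
  unfolding corr_def using tensor_expect_nonneg[OF povm_psd[OF povm_A] povm_psd[OF povm_B]] by blast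

lemma cmod_quantum_payoff:
  assumes "\<And>x y a b. 0 \<le> G x y a b"
  shows "cmod (quantum_payoff G d psi A B) = game_payoff G corr"
proof -
  have "quantum_payoff G d psi A B = of_real (game_payoff G corr)"
    unfolding quantum_payoff_def game_payoff_def tensor_expect_eq_corr by simp
  moreover have "0 \<le> game_payoff G corr"
    unfolding game_payoff_def using assms corr_nonneg by (intro sum_nonneg mult_nonneg_nonneg)
  ultimately show ?thesis by simp
qed

lemma sum_corr_right: "(\<Sum>b\<in>UNIV. corr x y a b) = Re (tensor_expect d psi (A x a) id_mat)"
proof -
  have "(\<Sum>b\<in>UNIV. tensor_expect d psi (A x a) (B y b)) = tensor_expect d psi (A x a) id_mat"
    unfolding tensor_expect_sum_right by (rule tensor_expect_cong) (auto simp: povm_sum_eq_id[OF povm_B])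
  then show ?thesis unfolding corr_def by (metis Re_sum)
qed

lemma sum_marginal_left: "(\<Sum>a\<in>UNIV. Re (tensor_expect d psi (A x a) id_mat)) = 1"
proof -
  have "(\<Sum>a\<in>UNIV. tensor_expect d psi (A x a) id_mat) = tensor_expect d psi id_mat id_mat"
    unfolding tensor_expect_sum_left by (rule tensor_expect_cong) (auto simp: povm_sum_eq_id[OF povm_A])
  then show ?thesis using tensor_expect_id_id[OF unit] by (metis Re_sum one_complex.sel(1))
qed

lemma corr_slice_classical: "(\<lambda>(x'::'x) y a b. corr x y a b) \<in> classical_corr"
  by (rule classical_corr_of_marginal[where r = "\<lambda>a. Re (tensor_expect d psi (A x a) id_mat)"])
    (simp_all add: corr_nonneg sum_corr_right sum_marginal_left)

lemma cmod_quantum_payoff_le_card_left: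
  assumes G_nonneg: "\<And>x y a b. 0 \<le> G x y a b"
  shows "cmod (quantum_payoff G d psi A B) \<le> real CARD('x) * classical_value G"
proof -
  have slice: "(\<Sum>y\<in>UNIV. \<Sum>a\<in>UNIV. \<Sum>b\<in>UNIV. G x y a b * corr x y a b) \<le> classical_value G" for x
  proof -
    have "(\<Sum>y\<in>UNIV. \<Sum>a\<in>UNIV. \<Sum>b\<in>UNIV. G x y a b * corr x y a b)
       \<le> game_payoff G (\<lambda>x' y a b. corr x y a b)"
      unfolding game_payoff_def using G_nonneg corr_nonneg
      by (intro member_le_sum[where f = "\<lambda>x'. \<Sum>y\<in>UNIV. \<Sum>a\<in>UNIV. \<Sum>b\<in>UNIV. G x' y a b * corr x y a b"])
        (auto intro!: sum_nonneg)
    also have "\<dots> \<le> classical_value G"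
      by (rule game_payoff_le_classical_value[OF corr_slice_classical])
    finally show ?thesis .
  qed
  have "game_payoff G corr \<le> (\<Sum>x\<in>(UNIV::'x set). classical_value G)"
    unfolding game_payoff_def by (intro sum_mono slice)
  then show ?thesis unfolding cmod_quantum_payoff[OF G_nonneg] by simp
qed

lemma cmod_quantum_payoff_le_sqrt_card_answers:
  assumes G_nonneg: "\<And>x y a b. 0 \<le> G x y a b"
  shows "cmod (quantum_payoff G d psi A B) \<le> sqrt (real (CARD('a) * CARD('b))) * classical_value G"
proof -
  define \<alpha> where "\<alpha> x a = sqrt (bisqnorm d (tensor_left d (A x a) psi))" for x a
  define \<beta> where "\<beta> y b = sqrt (bisqnorm d (tensor_right d (B y b) psi))" for y b
  have "(\<Sum>a\<in>UNIV. (\<alpha> x a)\<^sup>2) \<le> bisqnorm d psi" for x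
    unfolding \<alpha>_def using bisqnorm_nonneg povm_sum_bisqnorm_tensor_left_le[OF povm_A] by simp
  then have \<alpha>: "(\<Sum>a\<in>UNIV. (\<alpha> x a)\<^sup>2) \<le> 1" for x
    using unit unfolding unit_bipartite_iff_bisqnorm by simp
  have "(\<Sum>b\<in>UNIV. (\<beta> y b)\<^sup>2) \<le> bisqnorm d psi" for y
    unfolding \<beta>_def using bisqnorm_nonneg povm_sum_bisqnorm_tensor_right_le[OF povm_B] by simp
  then have \<beta>: "(\<Sum>b\<in>UNIV. (\<beta> y b)\<^sup>2) \<le> 1" for y
    using unit unfolding unit_bipartite_iff_bisqnorm by simp
  have "cmod (quantum_payoff G d psi A B)
      \<le> (\<Sum>x\<in>UNIV. \<Sum>y\<in>UNIV. \<Sum>a\<in>UNIV. \<Sum>b\<in>UNIV. cmod (complex_of_real (G x y a b) * tensor_expect d psi (A x a) (B y b)))"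
    unfolding quantum_payoff_def by (intro order_trans[OF norm_sum] sum_mono)+ simp
  also have "\<dots> \<le> game_payoff G (\<lambda>x y a b. \<alpha> x a * \<beta> y b)"
    unfolding game_payoff_def \<alpha>_def \<beta>_def using G_nonneg
    by (intro sum_mono) (simp add: norm_mult mult_left_mono cmod_tensor_expect_le[OF povm_psd[OF povm_A]])
  also have "\<dots> \<le> sqrt (real (CARD('a) * CARD('b))) * classical_value G"
    by (rule game_payoff_product_le_classical_value[OF G_nonneg \<alpha> \<beta>])
  finally show ?thesis .
qed

end

lemma quantum_strategy_swap_players:
  "quantum_strategy d psi A B \<Longrightarrow> quantum_strategy d (\<lambda>i j. psi j i) B A"
  using unit_bipartite_transpose[of d psi] unfolding quantum_strategy_def by simp

lemma quantum_payoff_swap_players: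
  "quantum_payoff (swap_players G) d (\<lambda>i j. psi j i) B A = quantum_payoff G d psi A B"
proof -
  have "quantum_payoff (swap_players G) d (\<lambda>i j. psi j i) B A
      = (\<Sum>x\<in>UNIV. \<Sum>y\<in>UNIV. \<Sum>b\<in>UNIV. \<Sum>a\<in>UNIV. complex_of_real (G x y a b) * tensor_expect d psi (A x a) (B y b))"
    unfolding quantum_payoff_def swap_players_def tensor_expect_transpose[of d psi] by (rule sum.swap)
  also have "\<dots> = quantum_payoff G d psi A B"
    unfolding quantum_payoff_def by (rule sum.cong[OF refl], rule sum.cong[OF refl], rule sum.swap)
  finally show ?thesis .
qed

lemma cmod_quantum_payoff_le_min_card_questions:
  fixes G :: "'x::finite \<Rightarrow> 'y::finite \<Rightarrow> 'a::finite \<Rightarrow> 'b::finite \<Rightarrow> real"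
  assumes "quantum_strategy d psi A B" and G_nonneg: "\<And>x y a b. 0 \<le> G x y a b"
  shows "cmod (quantum_payoff G d psi A B) \<le> real (min CARD('x) CARD('y)) * classical_value G"
proof -
  have "cmod (quantum_payoff G d psi A B) \<le> real CARD('x) * classical_value G"
    by (rule quantum_strategy.cmod_quantum_payoff_le_card_left[OF assms])
  moreover have "cmod (quantum_payoff G d psi A B) \<le> real CARD('y) * classical_value G"
    using quantum_strategy.cmod_quantum_payoff_le_card_left[OF quantum_strategy_swap_players[OF assms(1)],
        of "swap_players G"] G_nonneg
    unfolding quantum_payoff_swap_players classical_value_swap_players by (simp add: swap_players_def)
  ultimately show ?thesis by (simp add: min_def)
qed

section \<open>Existence of a complex Grothendieck constant\<close>

lemma cmod_inner_le: "cmod (\<Sum>i<d. a i * b i) \<le> sqrt (sqnorm d a) * sqrt (sqnorm d b)"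
proof -
  have "(cmod (\<Sum>i<d. a i * b i))\<^sup>2 \<le> sqnorm d a * sqnorm d b"
    unfolding sqnorm_def by (rule cmod_sum_mult_squared_le)
  then show ?thesis
    by (metis real_le_rsqrt real_sqrt_mult)
qed

definition vector_form :: "nat \<Rightarrow> nat \<Rightarrow> (nat \<Rightarrow> nat \<Rightarrow> complex) \<Rightarrow> nat
    \<Rightarrow> (nat \<Rightarrow> nat \<Rightarrow> complex) \<Rightarrow> (nat \<Rightarrow> nat \<Rightarrow> complex) \<Rightarrow> real" where
  "vector_form n m c d a b = cmod (\<Sum>x<n. \<Sum>y<m. c x y * (\<Sum>i<d. a x i * b y i))"

definition vector_form_values :: "nat \<Rightarrow> nat \<Rightarrow> (nat \<Rightarrow> nat \<Rightarrow> complex) \<Rightarrow> real set" where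
  "vector_form_values n m c = {vector_form n m c d a b | d a b.
      (\<forall>x<n. sqnorm d (a x) \<le> 1) \<and> (\<forall>y<m. sqnorm d (b y) \<le> 1)}"

definition scalar_form_values :: "nat \<Rightarrow> nat \<Rightarrow> (nat \<Rightarrow> nat \<Rightarrow> complex) \<Rightarrow> real set" where
  "scalar_form_values n m c = {cmod (\<Sum>x<n. \<Sum>y<m. c x y * s x * t y) | s t.
      (\<forall>x<n. cmod (s x) \<le> 1) \<and> (\<forall>y<m. cmod (t y) \<le> 1)}"

lemma groth_ineq_C_iff:
  "groth_ineq_C K \<longleftrightarrow> (\<forall>n m c d a b. (\<forall>x<n. sqnorm d (a x) \<le> 1) \<longrightarrow> (\<forall>y<m. sqnorm d (b y) \<le> 1) \<longrightarrow>
      vector_form n m c d a b \<le> K * Sup (scalar_form_values n m c))"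
  unfolding groth_ineq_C_def vector_form_def scalar_form_values_def sqnorm_def ..

lemma vector_form_le_coeff_sum:
  assumes "\<forall>x<n. sqnorm d (a x) \<le> 1" "\<forall>y<m. sqnorm d (b y) \<le> 1"
  shows "vector_form n m c d a b \<le> (\<Sum>x<n. \<Sum>y<m. cmod (c x y))"
proof -
  have "vector_form n m c d a b \<le> (\<Sum>x<n. \<Sum>y<m. cmod (c x y * (\<Sum>i<d. a x i * b y i)))"
    unfolding vector_form_def by (rule order_trans[OF norm_sum sum_mono]) (rule norm_sum)
  also have "\<dots> \<le> (\<Sum>x<n. \<Sum>y<m. cmod (c x y))"
  proof (intro sum_mono)
    fix x y assume "x \<in> {..<n}" "y \<in> {..<m}"
    then have "sqrt (sqnorm d (a x)) * sqrt (sqnorm d (b y)) \<le> 1"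
      using assms sqnorm_nonneg by (intro mult_le_one) auto
    then have "cmod (\<Sum>i<d. a x i * b y i) \<le> 1"
      using cmod_inner_le[where d = d and a = "a x" and b = "b y"] by linarith
    then show "cmod (c x y * (\<Sum>i<d. a x i * b y i)) \<le> cmod (c x y)"
      by (simp add: norm_mult mult_left_le)
  qed
  finally show ?thesis .
qed

lemma scalar_form_le_coeff_sum:
  assumes "\<forall>x<n. cmod (s x) \<le> 1" "\<forall>y<m. cmod (t y) \<le> 1"
  shows "cmod (\<Sum>x<n. \<Sum>y<m. c x y * s x * t y) \<le> (\<Sum>x<n. \<Sum>y<m. cmod (c x y))"
proof -
  have "cmod (\<Sum>x<n. \<Sum>y<m. c x y * s x * t y) \<le> (\<Sum>x<n. \<Sum>y<m. cmod (c x y * s x * t y))"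
    by (rule order_trans[OF norm_sum sum_mono]) (rule norm_sum)
  also have "\<dots> \<le> (\<Sum>x<n. \<Sum>y<m. cmod (c x y))"
  proof (intro sum_mono)
    fix x y assume "x \<in> {..<n}" "y \<in> {..<m}"
    then have "cmod (s x) * cmod (t y) \<le> 1" using assms by (intro mult_le_one) auto
    then show "cmod (c x y * s x * t y) \<le> cmod (c x y)"
      by (simp add: norm_mult mult.assoc mult_left_le)
  qed
  finally show ?thesis .
qed

lemma bdd_above_vector_form_values: "bdd_above (vector_form_values n m c)"
proof (rule bdd_aboveI)
  fix v assume "v \<in> vector_form_values n m c"
  then obtain d a b where "v = vector_form n m c d a b"
    "\<forall>x<n. sqnorm d (a x) \<le> 1" "\<forall>y<m. sqnorm d (b y) \<le> 1"
    unfolding vector_form_values_def by blast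
  then show "v \<le> (\<Sum>x<n. \<Sum>y<m. cmod (c x y))" using vector_form_le_coeff_sum by simp
qed

lemma vector_form_le_Sup:
  assumes "\<forall>x<n. sqnorm d (a x) \<le> 1" "\<forall>y<m. sqnorm d (b y) \<le> 1"
  shows "vector_form n m c d a b \<le> Sup (vector_form_values n m c)"
  by (rule cSup_upper[OF _ bdd_above_vector_form_values]) (use assms in \<open>auto simp: vector_form_values_def\<close>)

lemma Sup_vector_form_values_nonneg: "0 \<le> Sup (vector_form_values n m c)"
proof -
  have "vector_form n m c 0 (\<lambda>x i. 0) (\<lambda>y i. 0) \<le> Sup (vector_form_values n m c)"
    by (rule vector_form_le_Sup) (simp_all add: sqnorm_def)
  then show ?thesis by (simp add: vector_form_def)
qed

lemma bdd_above_scalar_form_values: "bdd_above (scalar_form_values n m c)"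
proof (rule bdd_aboveI)
  fix v assume "v \<in> scalar_form_values n m c"
  then obtain s t where "v = cmod (\<Sum>x<n. \<Sum>y<m. c x y * s x * t y)"
    "\<forall>x<n. cmod (s x) \<le> 1" "\<forall>y<m. cmod (t y) \<le> 1"
    unfolding scalar_form_values_def by blast
  then show "v \<le> (\<Sum>x<n. \<Sum>y<m. cmod (c x y))" using scalar_form_le_coeff_sum by simp
qed

lemma scalar_form_le_Sup:
  assumes "\<forall>x<n. cmod (s x) \<le> 1" "\<forall>y<m. cmod (t y) \<le> 1"
  shows "cmod (\<Sum>x<n. \<Sum>y<m. c x y * s x * t y) \<le> Sup (scalar_form_values n m c)"
  by (rule cSup_upper[OF _ bdd_above_scalar_form_values]) (use assms in \<open>auto simp: scalar_form_values_def\<close>)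

lemma Sup_scalar_form_values_le_coeff_sum: "Sup (scalar_form_values n m c) \<le> (\<Sum>x<n. \<Sum>y<m. cmod (c x y))"
proof (rule cSup_least)
  show "scalar_form_values n m c \<noteq> {}"
    unfolding scalar_form_values_def by (auto intro!: exI[of _ "\<lambda>x. 0"] exI[of _ "\<lambda>y. 0"])
next
  fix v assume "v \<in> scalar_form_values n m c"
  then obtain s t where "v = cmod (\<Sum>x<n. \<Sum>y<m. c x y * s x * t y)"
    "\<forall>x<n. cmod (s x) \<le> 1" "\<forall>y<m. cmod (t y) \<le> 1"
    unfolding scalar_form_values_def by blast
  then show "v \<le> (\<Sum>x<n. \<Sum>y<m. cmod (c x y))" using scalar_form_le_coeff_sum by simp
qed

lemma vector_form_finite_le_Sup:
  assumes "finite S" "0 < R1" "0 < R2"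
    and "\<forall>x<n. (\<Sum>w\<in>S. (cmod (a x w))\<^sup>2) \<le> R1" "\<forall>y<m. (\<Sum>w\<in>S. (cmod (b y w))\<^sup>2) \<le> R2"
  shows "cmod (\<Sum>x<n. \<Sum>y<m. c x y * (\<Sum>w\<in>S. a x w * b y w)) \<le> sqrt R1 * sqrt R2 * Sup (vector_form_values n m c)"
proof -
  obtain e where e: "bij_betw e {..<card S} S"
    using ex_bij_betw_nat_finite[OF assms(1)] unfolding atLeast0LessThan by blast
  have reindex: "(\<Sum>k<card S. f (e k)) = (\<Sum>w\<in>S. f w)" for f :: "_ \<Rightarrow> 'c::comm_monoid_add"
    by (rule sum.reindex_bij_betw[OF e])
  define a' where "a' x k = a x (e k) / of_real (sqrt R1)" for x k
  define b' where "b' y k = b y (e k) / of_real (sqrt R2)" for y k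
  have "\<forall>x<n. sqnorm (card S) (a' x) \<le> 1" "\<forall>y<m. sqnorm (card S) (b' y) \<le> 1"
    unfolding sqnorm_def a'_def b'_def
    using assms reindex[of "\<lambda>w. (cmod (a _ w))\<^sup>2"] reindex[of "\<lambda>w. (cmod (b _ w))\<^sup>2"]
    by (simp_all add: norm_divide power_divide flip: sum_divide_distrib)
  then have "vector_form n m c (card S) a' b' \<le> Sup (vector_form_values n m c)"
    by (rule vector_form_le_Sup)
  moreover have "vector_form n m c (card S) a' b'
      = cmod (\<Sum>x<n. \<Sum>y<m. c x y * (\<Sum>w\<in>S. a x w * b y w)) / (sqrt R1 * sqrt R2)"
  proof -
    have "(\<Sum>x<n. \<Sum>y<m. c x y * (\<Sum>k<card S. a' x k * b' y k))
        = (\<Sum>x<n. \<Sum>y<m. c x y * (\<Sum>w\<in>S. a x w * b y w)) / of_real (sqrt R1 * sqrt R2)"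
      unfolding a'_def b'_def reindex[of "\<lambda>w. a _ w * b _ w", symmetric]
      by (simp add: sum_divide_distrib sum_distrib_left)
    then show ?thesis unfolding vector_form_def using assms by (simp add: norm_divide norm_mult)
  qed
  ultimately show ?thesis using assms by (simp add: divide_le_eq mult.commute)
qed

lemma scalar_form_sum_le_Sup:
  assumes "0 < M" "\<forall>x<n. \<forall>w\<in>W. cmod (u x w) \<le> M" "\<forall>y<m. \<forall>w\<in>W. cmod (v y w) \<le> M"
  shows "cmod (\<Sum>x<n. \<Sum>y<m. c x y * (\<Sum>w\<in>W. u x w * v y w))
    \<le> real (card W) * M\<^sup>2 * Sup (scalar_form_values n m c)"
proof -
  have slice: "cmod (\<Sum>x<n. \<Sum>y<m. c x y * u x w * v y w) \<le> M\<^sup>2 * Sup (scalar_form_values n m c)"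
    if "w \<in> W" for w
  proof -
    have "(\<Sum>x<n. \<Sum>y<m. c x y * u x w * v y w)
        = of_real (M\<^sup>2) * (\<Sum>x<n. \<Sum>y<m. c x y * (u x w / of_real M) * (v y w / of_real M))"
      using assms(1) by (simp add: sum_distrib_left power2_eq_square field_simps)
    moreover have "cmod (\<Sum>x<n. \<Sum>y<m. c x y * (u x w / of_real M) * (v y w / of_real M))
        \<le> Sup (scalar_form_values n m c)"
      using assms that by (intro scalar_form_le_Sup) (simp_all add: norm_divide)
    ultimately show ?thesis by (simp add: norm_mult norm_power mult_left_mono)
  qed
  have "(\<Sum>x<n. \<Sum>y<m. c x y * (\<Sum>w\<in>W. u x w * v y w)) = (\<Sum>w\<in>W. \<Sum>x<n. \<Sum>y<m. c x y * u x w * v y w)"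
    by (simp add: sum_distrib_left mult.assoc sum.swap[where A = W])
  then have "cmod (\<Sum>x<n. \<Sum>y<m. c x y * (\<Sum>w\<in>W. u x w * v y w))
      \<le> (\<Sum>w\<in>W. cmod (\<Sum>x<n. \<Sum>y<m. c x y * u x w * v y w))"
    by (simp add: norm_sum)
  also have "\<dots> \<le> (\<Sum>w\<in>W. M\<^sup>2 * Sup (scalar_form_values n m c))"
    by (intro sum_mono slice)
  finally show ?thesis by simp
qed

definition sign_vectors :: "nat \<Rightarrow> bool list set" where
  "sign_vectors d = {ws. length ws = d}"

definition sign_sum :: "(nat \<Rightarrow> complex) \<Rightarrow> bool list \<Rightarrow> complex" where
  "sign_sum a ws = (\<Sum>i<length ws. if ws ! i then a i else - a i)"

lemma finite_sign_vectors: "finite (sign_vectors d)"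
  using finite_lists_length_eq[of "UNIV :: bool set" d] unfolding sign_vectors_def by simp

lemma card_sign_vectors: "card (sign_vectors d) = 2 ^ d"
  using card_lists_length_eq[of "UNIV :: bool set" d] unfolding sign_vectors_def by simp

lemma sum_sign_vectors_0: "(\<Sum>ws\<in>sign_vectors 0. f ws) = f []"
  unfolding sign_vectors_def by simp

lemma sum_sign_vectors_Suc:
  "(\<Sum>ws\<in>sign_vectors (Suc d). f ws) = (\<Sum>ws\<in>sign_vectors d. f (True # ws) + f (False # ws))"
proof -
  have split: "sign_vectors (Suc d) = (Cons True) ` sign_vectors d \<union> (Cons False) ` sign_vectors d"
    unfolding sign_vectors_def by (auto simp: length_Suc_conv)
  have "(\<Sum>ws\<in>sign_vectors (Suc d). f ws)
      = (\<Sum>ws\<in>(Cons True) ` sign_vectors d. f ws) + (\<Sum>ws\<in>(Cons False) ` sign_vectors d. f ws)"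
    unfolding split by (rule sum.union_disjoint) (auto simp: finite_sign_vectors)
  also have "\<dots> = (\<Sum>ws\<in>sign_vectors d. f (True # ws)) + (\<Sum>ws\<in>sign_vectors d. f (False # ws))"
    by (simp add: sum.reindex)
  finally show ?thesis by (simp add: sum.distrib)
qed

lemma sign_sum_Cons:
  "sign_sum a (True # ws) = sign_sum (\<lambda>i. a (Suc i)) ws + a 0"
  "sign_sum a (False # ws) = sign_sum (\<lambda>i. a (Suc i)) ws - a 0"
  unfolding sign_sum_def length_Cons sum.lessThan_Suc_shift by simp_all

lemma sqnorm_Suc_shift: "sqnorm (Suc d) a = (cmod (a 0))\<^sup>2 + sqnorm d (\<lambda>i. a (Suc i))"
  unfolding sqnorm_def by (simp add: sum.lessThan_Suc_shift del: sum.lessThan_Suc)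

lemma cmod_add_sq_plus_cmod_diff_sq:
  fixes u v :: complex
  shows "(cmod (u + v))\<^sup>2 + (cmod (u - v))\<^sup>2 = 2 * ((cmod u)\<^sup>2 + (cmod v)\<^sup>2)"
  by (cases u; cases v) (simp only: cmod_power2; simp add: power2_eq_square algebra_simps)

lemma cmod_add_pow4_plus_cmod_diff_pow4_le:
  fixes u v :: complex
  shows "(cmod (u + v))^4 + (cmod (u - v))^4 \<le> 2 * ((cmod u)\<^sup>2 + (cmod v)\<^sup>2)\<^sup>2 + 8 * (cmod u)\<^sup>2 * (cmod v)\<^sup>2"
proof -
  obtain p q where u: "u = Complex p q" by (cases u)
  obtain r s where v: "v = Complex r s" by (cases v)
  have pow4: "(cmod z)^4 = ((cmod z)\<^sup>2)\<^sup>2" for z by simp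
  have "(cmod (u + v))^4 + (cmod (u - v))^4 = 2 * ((p\<^sup>2 + q\<^sup>2) + (r\<^sup>2 + s\<^sup>2))\<^sup>2 + 8 * (p * r + q * s)\<^sup>2"
    unfolding pow4 u v cmod_power2 by (simp add: power2_eq_square algebra_simps)
  also have "(p * r + q * s)\<^sup>2 \<le> (p\<^sup>2 + q\<^sup>2) * (r\<^sup>2 + s\<^sup>2)"
    using zero_le_power2[of "p * s - q * r"] by (simp only: power2_eq_square algebra_simps)
  finally show ?thesis
    unfolding u v cmod_power2 by (simp add: algebra_simps)
qed

text \<open>\<open>sign_sum a\<close> is a Rademacher sum; these are its mixed second and its fourth moments.\<close>
lemma sum_sign_sum_mult: "(\<Sum>ws\<in>sign_vectors d. sign_sum a ws * sign_sum b ws) = 2 ^ d * (\<Sum>i<d. a i * b i)"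
proof (induction d arbitrary: a b)
  case 0
  then show ?case by (simp add: sum_sign_vectors_0 sign_sum_def)
next
  case (Suc d)
  have "(\<Sum>ws\<in>sign_vectors (Suc d). sign_sum a ws * sign_sum b ws)
     = (\<Sum>ws\<in>sign_vectors d. 2 * (sign_sum (\<lambda>i. a (Suc i)) ws * sign_sum (\<lambda>i. b (Suc i)) ws) + 2 * (a 0 * b 0))"
    unfolding sum_sign_vectors_Suc sign_sum_Cons by (intro sum.cong) (auto simp: algebra_simps)
  also have "\<dots> = 2 ^ Suc d * (\<Sum>i<Suc d. a i * b i)"
    by (simp add: sum.distrib sum_distrib_left[symmetric] Suc.IH card_sign_vectors sum.lessThan_Suc_shift
        algebra_simps del: sum.lessThan_Suc)
  finally show ?case .
qed

lemma sum_sign_sum_sq: "(\<Sum>ws\<in>sign_vectors d. (cmod (sign_sum a ws))\<^sup>2) = 2 ^ d * sqnorm d a"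
proof (induction d arbitrary: a)
  case 0
  then show ?case by (simp add: sum_sign_vectors_0 sign_sum_def sqnorm_def)
next
  case (Suc d)
  have "(\<Sum>ws\<in>sign_vectors (Suc d). (cmod (sign_sum a ws))\<^sup>2)
     = (\<Sum>ws\<in>sign_vectors d. 2 * (cmod (sign_sum (\<lambda>i. a (Suc i)) ws))\<^sup>2 + 2 * (cmod (a 0))\<^sup>2)"
    unfolding sum_sign_vectors_Suc sign_sum_Cons cmod_add_sq_plus_cmod_diff_sq by (simp add: algebra_simps)
  also have "\<dots> = 2 ^ Suc d * sqnorm (Suc d) a"
    by (simp add: sum.distrib sum_distrib_left[symmetric] Suc.IH card_sign_vectors sqnorm_Suc_shift algebra_simps)
  finally show ?case .
qed

lemma sum_sign_sum_pow4_le: "(\<Sum>ws\<in>sign_vectors d. (cmod (sign_sum a ws))^4) \<le> 3 * 2 ^ d * (sqnorm d a)\<^sup>2"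
proof (induction d arbitrary: a)
  case 0
  then show ?case by (simp add: sum_sign_vectors_0 sign_sum_def sqnorm_def)
next
  case (Suc d)
  let ?a = "\<lambda>i. a (Suc i)"
  let ?q = "(cmod (a 0))\<^sup>2"
  let ?s = "sqnorm d ?a"
  have "(\<Sum>ws\<in>sign_vectors (Suc d). (cmod (sign_sum a ws))^4)
     \<le> (\<Sum>ws\<in>sign_vectors d. 2 * ((cmod (sign_sum ?a ws))\<^sup>2 + ?q)\<^sup>2 + 8 * (cmod (sign_sum ?a ws))\<^sup>2 * ?q)"
    unfolding sum_sign_vectors_Suc sign_sum_Cons by (intro sum_mono cmod_add_pow4_plus_cmod_diff_pow4_le)
  also have "\<dots> = 2 * (\<Sum>ws\<in>sign_vectors d. (cmod (sign_sum ?a ws))^4)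
      + 12 * ?q * (\<Sum>ws\<in>sign_vectors d. (cmod (sign_sum ?a ws))\<^sup>2) + 2 * 2 ^ d * ?q\<^sup>2"
    by (simp add: power2_eq_square power4_eq_xxxx sum.distrib sum_distrib_left card_sign_vectors algebra_simps)
  also have "\<dots> \<le> 2 * (3 * 2 ^ d * ?s\<^sup>2) + 12 * ?q * (2 ^ d * ?s) + 2 * 2 ^ d * ?q\<^sup>2"
    using Suc.IH[of ?a] sum_sign_sum_sq[where d = d and a = ?a] by simp
  also have "\<dots> \<le> 3 * 2 ^ Suc d * (sqnorm (Suc d) a)\<^sup>2"
    using sqnorm_nonneg[of d ?a] unfolding sqnorm_Suc_shift by (simp add: power2_eq_square algebra_simps)
  finally show ?case .
qed

definition truncate :: "real \<Rightarrow> complex \<Rightarrow> complex" where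
  "truncate M z = (if cmod z \<le> M then z else of_real (M / cmod z) * z)"

lemma cmod_truncate:
  assumes "0 < M"
  shows "cmod (truncate M z) = min M (cmod z)"
proof (cases "cmod z \<le> M")
  case False
  then have "z \<noteq> 0" using assms by auto
  then have "cmod (of_real (M / cmod z) * z) = M"
    using assms by (simp only: norm_mult norm_of_real) simp
  then show ?thesis using False unfolding truncate_def by simp
qed (simp add: truncate_def)

lemma cmod_diff_truncate_sq_le:
  assumes "0 < M"
  shows "(cmod (z - truncate M z))\<^sup>2 \<le> (cmod z)^4 / M\<^sup>2"
proof (cases "cmod z \<le> M")
  case False
  then have z: "M < cmod z" by simp
  have "z - truncate M z = of_real (1 - M / cmod z) * z"
    using False unfolding truncate_def by (simp only: if_False of_real_diff of_real_1 left_diff_distrib mult_1)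
  then have "cmod (z - truncate M z) = \<bar>1 - M / cmod z\<bar> * cmod z"
    by (simp only: norm_mult norm_of_real)
  also have "\<dots> = cmod z - M"
  proof -
    have "0 \<le> 1 - M / cmod z" using z assms by (simp add: divide_le_eq_1)
    moreover have "z \<noteq> 0" using z assms by auto
    ultimately show ?thesis using z assms by (simp add: field_simps)
  qed
  also have "\<dots> \<le> (cmod z)\<^sup>2 / M"
  proof -
    have "M * (cmod z - M) \<le> M * cmod z" using assms by simp
    also have "\<dots> \<le> (cmod z)\<^sup>2" using z by (simp add: power2_eq_square mult_right_mono)
    finally have "M * (cmod z - M) \<le> (cmod z)\<^sup>2" .
    then show ?thesis using assms by (simp add: field_simps)
  qed
  finally have "(cmod (z - truncate M z))\<^sup>2 \<le> ((cmod z)\<^sup>2 / M)\<^sup>2"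
    by (rule power_mono) simp
  then show ?thesis by (simp add: power_divide power2_eq_square power4_eq_xxxx)
qed (simp add: truncate_def)

lemma sum_sign_sum_truncate_error:
  assumes "sqnorm d a \<le> 1"
  shows "(\<Sum>ws\<in>sign_vectors d. (cmod (sign_sum a ws - truncate 4 (sign_sum a ws)))\<^sup>2) \<le> 3 * 2 ^ d / 16"
proof -
  have "(\<Sum>ws\<in>sign_vectors d. (cmod (sign_sum a ws - truncate 4 (sign_sum a ws)))\<^sup>2)
      \<le> (\<Sum>ws\<in>sign_vectors d. (cmod (sign_sum a ws))^4) / 16"
    unfolding sum_divide_distrib using cmod_diff_truncate_sq_le[of 4] by (intro sum_mono) simp
  also have "\<dots> \<le> 3 * 2 ^ d * (sqnorm d a)\<^sup>2 / 16"
    using sum_sign_sum_pow4_le[where d = d and a = a] by simp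
  also have "\<dots> \<le> 3 * 2 ^ d / 16"
    using assms sqnorm_nonneg[of d a] by (simp add: power_le_one)
  finally show ?thesis .
qed

lemma vector_form_sign_split:
  fixes s t :: "nat \<Rightarrow> bool list \<Rightarrow> complex"
  shows "(\<Sum>x<n. \<Sum>y<m. c x y * (\<Sum>i<d. a x i * b y i)) * 2 ^ d
    = (\<Sum>x<n. \<Sum>y<m. c x y * (\<Sum>w\<in>sign_vectors d. s x w * t y w))
    + (\<Sum>x<n. \<Sum>y<m. c x y * (\<Sum>w\<in>sign_vectors d. (sign_sum (a x) w - s x w) * sign_sum (b y) w))
    + (\<Sum>x<n. \<Sum>y<m. c x y * (\<Sum>w\<in>sign_vectors d. s x w * (sign_sum (b y) w - t y w)))"
proof -
  have inner: "(\<Sum>i<d. a x i * b y i) * 2 ^ d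
      = (\<Sum>w\<in>sign_vectors d. s x w * t y w)
      + (\<Sum>w\<in>sign_vectors d. (sign_sum (a x) w - s x w) * sign_sum (b y) w)
      + (\<Sum>w\<in>sign_vectors d. s x w * (sign_sum (b y) w - t y w))" for x y
  proof -
    have "(\<Sum>i<d. a x i * b y i) * 2 ^ d = (\<Sum>w\<in>sign_vectors d. sign_sum (a x) w * sign_sum (b y) w)"
      by (simp add: sum_sign_sum_mult mult.commute)
    also have "\<dots> = (\<Sum>w\<in>sign_vectors d. s x w * t y w + (sign_sum (a x) w - s x w) * sign_sum (b y) w
        + s x w * (sign_sum (b y) w - t y w))"
      by (intro sum.cong refl) (simp add: algebra_simps)
    finally show ?thesis by (simp add: sum.distrib)
  qed
  have "(\<Sum>x<n. \<Sum>y<m. c x y * (\<Sum>i<d. a x i * b y i)) * 2 ^ d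
      = (\<Sum>x<n. \<Sum>y<m. c x y * ((\<Sum>i<d. a x i * b y i) * 2 ^ d))"
    by (simp add: sum_distrib_right mult.assoc)
  then show ?thesis by (simp only: inner distrib_left sum.distrib)
qed

lemma sqrt_three_sixteenths_bound:
  fixes N :: real
  assumes "0 \<le> N"
  shows "sqrt (3 * N / 16) * sqrt N \<le> 7/16 * N"
proof -
  have "sqrt (3 * N / 16) * sqrt N = sqrt (3 / 16 * (N * N))"
    unfolding real_sqrt_mult[symmetric] by (simp add: algebra_simps)
  also have "\<dots> = sqrt (3 / 16) * N"
    using assms by (simp only: real_sqrt_mult real_sqrt_mult_self abs_of_nonneg)
  also have "\<dots> \<le> 7/16 * N"
    by (rule mult_right_mono[OF _ assms], rule real_le_lsqrt) (auto simp: power2_eq_square)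
  finally show ?thesis .
qed

text \<open>Averaging over sign vectors writes \<open>a \<cdot> b\<close> as a mean of products of scalars, which we truncate
  at \<open>4\<close>. The truncated part is a scalar form; by the fourth-moment bound the remainder is a vector
  form with small norms, controlled by the very supremum being estimated.\<close>
lemma vector_form_le_scalar_plus_vector:
  assumes a: "\<forall>x<n. sqnorm d (a x) \<le> 1" and b: "\<forall>y<m. sqnorm d (b y) \<le> 1"
  shows "vector_form n m c d a b
    \<le> 16 * Sup (scalar_form_values n m c) + 7/8 * Sup (vector_form_values n m c)"
proof -
  let ?W = "sign_vectors d"
  let ?SB = "Sup (scalar_form_values n m c)" and ?SV = "Sup (vector_form_values n m c)"
  let ?Q = "\<lambda>u v. \<Sum>x<n. \<Sum>y<m. c x y * (\<Sum>w\<in>?W. u x w * v y w)"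
  define N :: real where "N = 2 ^ d"
  have N: "0 < N" "real (card ?W) = N" unfolding N_def by (simp_all add: card_sign_vectors)
  define f where "f x w = sign_sum (a x) w" for x w
  define g where "g y w = sign_sum (b y) w" for y w
  define tf where "tf x w = truncate 4 (f x w)" for x w
  define tg where "tg y w = truncate 4 (g y w)" for y w
  have f2: "(\<Sum>w\<in>?W. (cmod (f x w))\<^sup>2) \<le> N" if "x < n" for x
    using a that unfolding f_def sum_sign_sum_sq N_def by simp
  have tf2: "(\<Sum>w\<in>?W. (cmod (tf x w))\<^sup>2) \<le> N" if "x < n" for x
  proof -
    have "(\<Sum>w\<in>?W. (cmod (tf x w))\<^sup>2) \<le> (\<Sum>w\<in>?W. (cmod (f x w))\<^sup>2)"
      unfolding tf_def by (intro sum_mono power_mono) (simp_all add: cmod_truncate)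
    then show ?thesis using f2[OF that] by linarith
  qed
  have f_err: "(\<Sum>w\<in>?W. (cmod (f x w - tf x w))\<^sup>2) \<le> 3 * N / 16" if "x < n" for x
    using a that sum_sign_sum_truncate_error unfolding f_def tf_def N_def by simp
  have g2: "(\<Sum>w\<in>?W. (cmod (g y w))\<^sup>2) \<le> N" if "y < m" for y
    using b that unfolding g_def sum_sign_sum_sq N_def by simp
  have g_err: "(\<Sum>w\<in>?W. (cmod (g y w - tg y w))\<^sup>2) \<le> 3 * N / 16" if "y < m" for y
    using b that sum_sign_sum_truncate_error unfolding g_def tg_def N_def by simp
  have split: "(\<Sum>x<n. \<Sum>y<m. c x y * (\<Sum>i<d. a x i * b y i)) * 2 ^ d
      = ?Q tf tg + ?Q (\<lambda>x w. f x w - tf x w) g + ?Q tf (\<lambda>y w. g y w - tg y w)"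
    unfolding f_def g_def by (rule vector_form_sign_split)
  have "vector_form n m c d a b * N
      = cmod (?Q tf tg + ?Q (\<lambda>x w. f x w - tf x w) g + ?Q tf (\<lambda>y w. g y w - tg y w))"
    unfolding vector_form_def N_def split[symmetric] by (simp add: norm_mult norm_power)
  also have "\<dots> \<le> cmod (?Q tf tg) + cmod (?Q (\<lambda>x w. f x w - tf x w) g) + cmod (?Q tf (\<lambda>y w. g y w - tg y w))"
    by (intro order_trans[OF norm_triangle_ineq] add_mono norm_triangle_ineq order_refl)
  also have "\<dots> \<le> N * 4\<^sup>2 * ?SB + 7/16 * N * ?SV + 7/16 * N * ?SV"
  proof (intro add_mono)
    have "\<forall>x<n. \<forall>w\<in>?W. cmod (tf x w) \<le> 4" "\<forall>y<m. \<forall>w\<in>?W. cmod (tg y w) \<le> 4"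
      unfolding tf_def tg_def by (simp_all add: cmod_truncate)
    from scalar_form_sum_le_Sup[OF _ this, of c]
    show "cmod (?Q tf tg) \<le> N * 4\<^sup>2 * ?SB" unfolding N(2) by simp
    have "cmod (?Q (\<lambda>x w. f x w - tf x w) g) \<le> sqrt (3 * N / 16) * sqrt N * ?SV"
      using N(1) f_err g2 by (intro vector_form_finite_le_Sup[OF finite_sign_vectors]) simp_all
    also have "\<dots> \<le> 7/16 * N * ?SV"
      using N(1) by (intro mult_right_mono sqrt_three_sixteenths_bound Sup_vector_form_values_nonneg) simp
    finally show "cmod (?Q (\<lambda>x w. f x w - tf x w) g) \<le> 7/16 * N * ?SV" .
    have "cmod (?Q tf (\<lambda>y w. g y w - tg y w)) \<le> sqrt N * sqrt (3 * N / 16) * ?SV"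
      using N(1) tf2 g_err by (intro vector_form_finite_le_Sup[OF finite_sign_vectors]) simp_all
    also have "\<dots> \<le> 7/16 * N * ?SV"
      using N(1) by (subst mult.commute, intro mult_right_mono sqrt_three_sixteenths_bound Sup_vector_form_values_nonneg) simp
    finally show "cmod (?Q tf (\<lambda>y w. g y w - tg y w)) \<le> 7/16 * N * ?SV" .
  qed
  finally have "vector_form n m c d a b * N \<le> (16 * ?SB + 7/8 * ?SV) * N"
    by (simp add: algebra_simps)
  then show ?thesis using N by simp
qed

lemma groth_ineq_C_128: "groth_ineq_C 128"
  unfolding groth_ineq_C_iff
proof (intro allI impI)
  fix n m c d and a b :: "nat \<Rightarrow> nat \<Rightarrow> complex"
  let ?SB = "Sup (scalar_form_values n m c)" and ?SV = "Sup (vector_form_values n m c)"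
  assume "\<forall>x<n. sqnorm d (a x) \<le> 1" "\<forall>y<m. sqnorm d (b y) \<le> 1"
  then have "vector_form n m c d a b \<le> ?SV"
    by (rule vector_form_le_Sup)
  moreover have "?SV \<le> 16 * ?SB + 7/8 * ?SV"
  proof (rule cSup_least)
    show "vector_form_values n m c \<noteq> {}"
      unfolding vector_form_values_def by (auto simp: sqnorm_def intro!: exI[of _ 0])
  next
    fix v assume "v \<in> vector_form_values n m c"
    then obtain d' a' b' where "v = vector_form n m c d' a' b'"
      "\<forall>x<n. sqnorm d' (a' x) \<le> 1" "\<forall>y<m. sqnorm d' (b' y) \<le> 1"
      unfolding vector_form_values_def by blast
    then show "v \<le> 16 * ?SB + 7/8 * ?SV" using vector_form_le_scalar_plus_vector by simp
  qed
  ultimately show "vector_form n m c d a b \<le> 128 * ?SB"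
    by linarith
qed

lemma groth_ineq_C_imp_ge_1:
  assumes "groth_ineq_C K"
  shows "1 \<le> K"
proof (rule ccontr)
  assume "\<not> 1 \<le> K"
  let ?one = "\<lambda>_ _. 1 :: complex"
  let ?S = "Sup (scalar_form_values 1 1 ?one)"
  have "vector_form 1 1 ?one 1 ?one ?one \<le> K * ?S"
    using assms[unfolded groth_ineq_C_iff, rule_format, of 1 1 ?one 1 ?one ?one] by (simp add: sqnorm_def)
  then have le: "1 \<le> K * ?S"
    by (simp add: vector_form_def)
  have S1: "?S \<le> 1"
    using Sup_scalar_form_values_le_coeff_sum[of 1 1 ?one] by simp
  have S0: "0 \<le> ?S"
    using scalar_form_le_Sup[of 1 "\<lambda>_. 0" 1 "\<lambda>_. 0" ?one] by simp
  have "K * ?S \<le> ?S"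
    using mult_right_mono[of K 1 ?S] \<open>\<not> 1 \<le> K\<close> S0 by simp
  then have "?S = 1" using le S1 by linarith
  then show False using le \<open>\<not> 1 \<le> K\<close> by simp
qed

lemma grothendieck_C_ge_1: "1 \<le> grothendieck_C"
  unfolding grothendieck_C_def
  by (rule cInf_greatest) (use groth_ineq_C_128 groth_ineq_C_imp_ge_1 in auto)

section \<open>Quantum versus classical value\<close>

lemma quantum_value_le_min_card_questions:
  fixes G :: "'x::finite \<Rightarrow> 'y::finite \<Rightarrow> 'a::finite \<Rightarrow> 'b::finite \<Rightarrow> real"
  assumes "\<And>x y a b. 0 \<le> G x y a b"
  shows "quantum_value G \<le> real (min CARD('x) CARD('y)) * classical_value G"
  by (rule quantum_value_le) (rule cmod_quantum_payoff_le_min_card_questions[OF _ assms])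

lemma quantum_value_le_sqrt_card_answers:
  fixes G :: "'x::finite \<Rightarrow> 'y::finite \<Rightarrow> 'a::finite \<Rightarrow> 'b::finite \<Rightarrow> real"
  assumes "\<And>x y a b. 0 \<le> G x y a b"
  shows "quantum_value G \<le> sqrt (real (CARD('a) * CARD('b))) * classical_value G"
  by (rule quantum_value_le) (rule quantum_strategy.cmod_quantum_payoff_le_sqrt_card_answers[OF _ assms])

theorem mainTheorem4:
  fixes \<pi> :: "'x::finite \<Rightarrow> 'y::finite \<Rightarrow> real"
    and V :: "'a::finite \<Rightarrow> 'b::finite \<Rightarrow> 'x \<Rightarrow> 'y \<Rightarrow> real"
  assumes nonneg: "\<forall>x y a b. 0 \<le> \<pi> x y * V a b x y"
  shows "quantum_value (\<lambda>x y a b. \<pi> x y * V a b x y)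
           \<le> real (min CARD('x) CARD('y)) * classical_value (\<lambda>x y a b. \<pi> x y * V a b x y)
         \<and> quantum_value (\<lambda>x y a b. \<pi> x y * V a b x y)
           \<le> grothendieck_C * sqrt (real (CARD('a) * CARD('b)))
               * classical_value (\<lambda>x y a b. \<pi> x y * V a b x y)"
proof -
  let ?G = "\<lambda>x y a b. \<pi> x y * V a b x y"
  have G_nonneg: "\<And>x y a b. 0 \<le> ?G x y a b" using nonneg by blast
  have "quantum_value ?G \<le> sqrt (real (CARD('a) * CARD('b))) * classical_value ?G"
    by (rule quantum_value_le_sqrt_card_answers[OF G_nonneg])
  also have "\<dots> \<le> grothendieck_C * (sqrt (real (CARD('a) * CARD('b))) * classical_value ?G)"
    using mult_right_mono[OF grothendieck_C_ge_1, of "sqrt (real (CARD('a) * CARD('b))) * classical_value ?G"]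
      classical_value_nonneg[of ?G] by simp
  finally show ?thesis
    using quantum_value_le_min_card_questions[OF G_nonneg] by (simp add: mult.assoc)
qed

end
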